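(* Fix $r>0$, $\sigma>0$ and $\varepsilon>0$. For each $P$ (the "uncorrelated points" model) consider labels $y^1,\dots,y^P$ i.i.d. $\mathcal{N}(0,\sigma^2)$ (points $\mathbf{x}^\mu\in\mathbb{R}^N$ with i.i.d. entries $\mathcal{N}(0,r^2/N)$, i.e. covariance tensor $\Sigma_{\mu0}^{\nu0}=r^2\delta_{\mu\nu}$ with $D=0$). For a label vector $\mathbf{y}\in\mathbb{R}^P$ define $\mathcal{A}(\mathbf{y})=\{\mathbf{w}\in\mathbb{R}^P: |r w^\mu-y^\mu|\le\varepsilon\ \text{for all }\mu\}$, its cone $\mathcal{A}(\mathbf{y})^+=\{\lambda\mathbf{w}:\mathbf{w}\in\mathcal{A}(\mathbf{y}),\lambda\ge0\}$, and the label-conditioned estimator $$\alpha_{\mathsf{mf}}(\varepsilon,P,\mathbf{y})^{-1}=\frac1P\,\mathbb{E}_{\mathbf{t}}\left[\min_{\mathbf{w}^+\in\mathcal{A}(\mathbf{y})^+}\|\mathbf{t}-\mathbf{w}^+\|^2\right],\quad \mathbf{t}\sim\mathcal{N}(0,I_P).$$ Then the capacity of this model, $\alpha^{-1}(\varepsilon,r,\sigma)=\lim_{P\to\infty}\mathbb{E}_{\mathbf{y}}\big[\alpha_{\mathsf{mf}}(\varepsilon,P,\mathbf{y})^{-1}\big]$, is given by $$\alpha^{-1}(\varepsilon,r,\sigma)=\min_{\tau\ge0}\,2\int_{b/a}^{\infty}\mathcal{D}z\,(az-b)^2,\qquad a=\sqrt{1+\frac{\sigma^2\tau^2}{r^2}},\quad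 b=\frac{\varepsilon\tau}{r},$$ where $\mathcal{D}z$ denotes the standard Gaussian measure.
   Context: $\mathcal{D}z=\frac{1}{\sqrt{2\pi}}e^{-z^2/2}dz$. *)

theory Defs
  imports "HOL-Probability.Probability"
begin

text \<open>Label/weight vectors in R^P are represented as extensional functions
  on the index set {..<P} (indices 0..P-1 play the role of mu = 1..P).\<close>

definition feasible_set :: "real \<Rightarrow> real \<Rightarrow> nat \<Rightarrow> (nat \<Rightarrow> real) \<Rightarrow> (nat \<Rightarrow> real) set" where
  "feasible_set r eps P y =
     {w \<in> {..<P} \<rightarrow>\<^sub>E (UNIV :: real set). \<forall>\<mu><P. \<bar>r * w \<mu> - y \<mu>\<bar> \<le> eps}"

definition feasible_cone :: "real \<Rightarrow> real \<Rightarrow> nat \<Rightarrow> (nat \<Rightarrow> real) \<Rightarrow> (nat \<Rightarrow> real) set" where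
  "feasible_cone r eps P y =
     {restrict (\<lambda>\<mu>. l * w \<mu>) {..<P} | l w. l \<ge> 0 \<and> w \<in> feasible_set r eps P y}"

text \<open>Squared Euclidean distance from t to the cone (the min is attained; written as Inf).\<close>
definition sqdist_cone :: "real \<Rightarrow> real \<Rightarrow> nat \<Rightarrow> (nat \<Rightarrow> real) \<Rightarrow> (nat \<Rightarrow> real) \<Rightarrow> real" where
  "sqdist_cone r eps P y t =
     (INF w \<in> feasible_cone r eps P y. \<Sum>\<mu><P. (t \<mu> - w \<mu>)\<^sup>2)"

definition gauss_vec :: "nat \<Rightarrow> real \<Rightarrow> (nat \<Rightarrow> real) measure" where
  "gauss_vec P s = PiM {..<P} (\<lambda>_. density lborel (normal_density 0 s))"

definition alpha_mf_inv :: "real \<Rightarrow> real \<Rightarrow> nat \<Rightarrow> (nat \<Rightarrow> real) \<Rightarrow> real" where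
  "alpha_mf_inv r eps P y =
     (1 / real P) * (\<integral>t. sqdist_cone r eps P y t \<partial>gauss_vec P 1)"

definition mean_alpha_inv :: "real \<Rightarrow> real \<Rightarrow> real \<Rightarrow> nat \<Rightarrow> real" where
  "mean_alpha_inv r sg eps P = (\<integral>y. alpha_mf_inv r eps P y \<partial>gauss_vec P sg)"

definition replica_fun :: "real \<Rightarrow> real \<Rightarrow> real \<Rightarrow> real \<Rightarrow> real" where
  "replica_fun r sg eps tau =
     (let a = sqrt (1 + sg\<^sup>2 * tau\<^sup>2 / r\<^sup>2); b = eps * tau / r in
      2 * (LINT z:{b / a..}|lborel. std_normal_density z * (a * z - b)\<^sup>2))"

end

theory Submission
  imports Defs
begin

text \<open>
  Write a point of the cone \<open>A(y)\<^sup>+\<close> as \<open>\<lambda> w\<close> and put \<open>k = \<lambda> / r\<close>: its coordinates then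
  range independently over the intervals \<open>k [y\<^sup>\<mu> - \<epsilon>, y\<^sup>\<mu> + \<epsilon>]\<close>. So the squared distance from
  \<open>t\<close> to the cone is the infimum over \<open>k \<ge> 0\<close> of a sum of \<open>P\<close> i.i.d. convex functions of \<open>k\<close>,
  each with mean \<open>F k = E (max 0 (\<bar>x - k a\<bar> - \<epsilon> k))\<^sup>2\<close> for \<open>x\<close> standard normal and
  \<open>a\<close> normal with variance \<open>\<sigma>\<^sup>2\<close>. As \<open>x - k a\<close> is normal with variance \<open>1 + k\<^sup>2 \<sigma>\<^sup>2\<close>,
  \<open>F (\<tau> / r)\<close> is the replica integral. Fixing \<open>k\<close> bounds the estimator by \<open>min F\<close> for
  every \<open>P\<close>. Conversely, by Chebyshev's inequality the normalised sum is close to \<open>F\<close> on a finite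
  grid of \<open>k\<close> with probability \<open>1 - O(1/P)\<close>; convexity in \<open>k\<close> transfers this to all of
  \<open>[0, \<infinity>)\<close>, and coercivity of \<open>F\<close> lets the grid be bounded. Hence the estimator tends to
  \<open>min F\<close>.
\<close>

section \<open>Distance to the feasible cone\<close>

definition excess :: "real \<Rightarrow> real \<Rightarrow> real" where
  "excess b u = max 0 (\<bar>u\<bar> - b)"

lemma excess_nonneg [simp]: "0 \<le> excess b u"
  by (simp add: excess_def)

lemma excess_le_abs_diff:
  assumes "\<bar>w\<bar> \<le> b"
  shows "excess b u \<le> \<bar>u - w\<bar>"
  using assms abs_triangle_ineq2[of u w] by (simp add: excess_def)

lemma excess_eq_abs_diff_clamp:
  assumes "0 \<le> b"
  shows "excess b u = \<bar>u - max (- b) (min b u)\<bar>"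
  using assms by (auto simp: excess_def max_def min_def)

lemma excess_mono:
  assumes "\<bar>u\<bar> \<le> \<bar>v\<bar>"
  shows "excess b u \<le> excess b v"
  using assms by (simp add: excess_def)

lemma excess_scale:
  assumes "0 \<le> k"
  shows "excess (k * b) (k * u) = k * excess b u"
  using assms by (simp add: excess_def abs_mult max_mult_distrib_left right_diff_distrib)

lemma excess_le_abs: "0 \<le> b \<Longrightarrow> excess b u \<le> \<bar>u\<bar>"
  by (simp add: excess_def)

text \<open>The squared distance from \<open>x\<close> to the interval \<open>k [a - e, a + e]\<close>; the scale \<open>k\<close> is the
  paper's \<open>\<lambda>\<close> divided by \<open>r\<close>.\<close>
definition coord_cost :: "real \<Rightarrow> real \<Rightarrow> real \<Rightarrow> real \<Rightarrow> real" where
  "coord_cost e k a x = (excess (e * k) (x - k * a))\<^sup>2"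

definition cone_objective :: "real \<Rightarrow> nat \<Rightarrow> (nat \<Rightarrow> real) \<Rightarrow> (nat \<Rightarrow> real) \<Rightarrow> real \<Rightarrow> real" where
  "cone_objective e P y t k = (\<Sum>\<mu><P. coord_cost e k (y \<mu>) (t \<mu>))"

lemma coord_cost_nonneg [simp]: "0 \<le> coord_cost e k a x"
  by (simp add: coord_cost_def)

lemma coord_cost_0 [simp]: "coord_cost e 0 a x = x\<^sup>2"
  by (simp add: coord_cost_def excess_def)

lemma cone_objective_nonneg: "0 \<le> cone_objective e P y t k"
  by (simp add: cone_objective_def sum_nonneg)

lemma cone_objective_le_sqdist:
  assumes "0 < r" and "w \<in> feasible_cone r e P y"
  shows "\<exists>k\<in>{0..}. cone_objective e P y t k \<le> (\<Sum>\<mu><P. (t \<mu> - w \<mu>)\<^sup>2)"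
proof -
  obtain l v where w: "w = restrict (\<lambda>\<mu>. l * v \<mu>) {..<P}" and l: "0 \<le> l"
    and v: "v \<in> feasible_set r e P y"
    using assms(2) unfolding feasible_cone_def by blast
  have "coord_cost e (l / r) (y \<mu>) (t \<mu>) \<le> (t \<mu> - w \<mu>)\<^sup>2" if "\<mu> < P" for \<mu>
  proof -
    have "\<bar>r * v \<mu> - y \<mu>\<bar> \<le> e"
      using v that by (auto simp: feasible_set_def)
    moreover have "w \<mu> - l / r * y \<mu> = (r * v \<mu> - y \<mu>) * (l / r)"
      using assms(1) that by (simp add: w field_simps)
    ultimately have "\<bar>w \<mu> - l / r * y \<mu>\<bar> \<le> e * (l / r)"
      using assms(1) l by (metis abs_mult abs_of_nonneg divide_nonneg_pos mult_right_mono)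
    from excess_le_abs_diff[OF this, of "t \<mu> - l / r * y \<mu>"]
    have "excess (e * (l / r)) (t \<mu> - l / r * y \<mu>) \<le> \<bar>t \<mu> - w \<mu>\<bar>"
      by simp
    then show ?thesis
      unfolding coord_cost_def by (metis excess_nonneg power2_abs power_mono)
  qed
  then show ?thesis
    using assms(1) l unfolding cone_objective_def
    by (intro bexI[of _ "l / r"]) (auto intro: sum_mono)
qed

text \<open>For \<open>k = 0\<close> the clamped offset \<open>c\<close> vanishes, so the division by \<open>r k\<close> is harmless.\<close>
lemma cone_objective_attained:
  assumes "0 < r" and "0 \<le> e" and "0 \<le> k"
  shows "\<exists>w\<in>feasible_cone r e P y. (\<Sum>\<mu><P. (t \<mu> - w \<mu>)\<^sup>2) = cone_objective e P y t k"
proof -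
  define c where "c \<mu> = max (- (e * k)) (min (e * k) (t \<mu> - k * y \<mu>))" for \<mu>
  define v where "v = restrict (\<lambda>\<mu>. y \<mu> / r + c \<mu> / (r * k)) {..<P}"
  have "0 \<le> e * k"
    using assms by simp
  then have c: "\<bar>c \<mu>\<bar> \<le> e * k" and c0: "k = 0 \<Longrightarrow> c \<mu> = 0" for \<mu>
    by (auto simp: c_def max_def min_def)
  have "\<bar>r * v \<mu> - y \<mu>\<bar> \<le> e" if "\<mu> < P" for \<mu>
  proof (cases "k = 0")
    case False
    then have "r * v \<mu> - y \<mu> = c \<mu> / k"
      using that assms(1) by (simp add: v_def field_simps)
    then show ?thesis
      using c[of \<mu>] False assms by (simp add: abs_divide divide_le_eq mult.commute)
  qed (use that assms in \<open>simp add: v_def\<close>)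
  then have v: "v \<in> feasible_set r e P y"
    by (auto simp: feasible_set_def v_def)
  define w where "w = restrict (\<lambda>\<mu>. (r * k) * v \<mu>) {..<P}"
  have "w \<in> feasible_cone r e P y"
    unfolding feasible_cone_def w_def using assms v by fastforce
  moreover have "(t \<mu> - w \<mu>)\<^sup>2 = coord_cost e k (y \<mu>) (t \<mu>)" if "\<mu> < P" for \<mu>
  proof -
    have "w \<mu> = k * y \<mu> + c \<mu>"
      using that assms c0 by (cases "k = 0") (auto simp: w_def v_def field_simps)
    then show ?thesis
      using assms by (simp add: coord_cost_def excess_eq_abs_diff_clamp c_def algebra_simps)
  qed
  ultimately show ?thesis
    unfolding cone_objective_def by (intro bexI[of _ w] sum.cong) auto
qed

lemma sqdist_cone_eq_INF:
  assumes "0 < r" and "0 \<le> e"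
  shows "sqdist_cone r e P y t = (INF k\<in>{0..}. cone_objective e P y t k)"
  unfolding sqdist_cone_def
proof (rule antisym)
  have "feasible_cone r e P y \<noteq> {}"
    using cone_objective_attained[OF assms order_refl] by blast
  then show "(INF k\<in>{0..}. cone_objective e P y t k) \<le> (INF w\<in>feasible_cone r e P y. \<Sum>\<mu><P. (t \<mu> - w \<mu>)\<^sup>2)"
    using cone_objective_le_sqdist[OF assms(1)]
    by (intro cINF_mono) (auto intro: bdd_belowI[of _ 0] cone_objective_nonneg)
  show "(INF w\<in>feasible_cone r e P y. \<Sum>\<mu><P. (t \<mu> - w \<mu>)\<^sup>2) \<le> (INF k\<in>{0..}. cone_objective e P y t k)"
    using cone_objective_attained[OF assms, of _ P y t]
    by (intro cINF_mono) (auto intro!: bdd_belowI[of _ 0] sum_nonneg, metis order_refl)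
qed

lemma sqdist_cone_nonneg:
  assumes "0 < r" and "0 \<le> e"
  shows "0 \<le> sqdist_cone r e P y t"
  unfolding sqdist_cone_eq_INF[OF assms] by (intro cINF_greatest) (auto simp: cone_objective_nonneg)

lemma sqdist_cone_le_cone_objective:
  assumes "0 < r" and "0 \<le> e" and "0 \<le> k"
  shows "sqdist_cone r e P y t \<le> cone_objective e P y t k"
  unfolding sqdist_cone_eq_INF[OF assms(1,2)] using assms(3)
  by (intro cINF_lower bdd_belowI[of _ 0]) (auto simp: cone_objective_nonneg)

lemma sqdist_cone_greatest:
  assumes "0 < r" and "0 \<le> e" and "\<And>k. 0 \<le> k \<Longrightarrow> z \<le> cone_objective e P y t k"
  shows "z \<le> sqdist_cone r e P y t"
  unfolding sqdist_cone_eq_INF[OF assms(1,2)] using assms(3) by (intro cINF_greatest) auto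

lemma INF_nonneg_eq_INF_nonneg_Rats:
  fixes f :: "real \<Rightarrow> real"
  assumes cont: "continuous_on {0..} f" and bdd: "bdd_below (f ` {0..})"
  shows "(INF k\<in>{0..}. f k) = (INF k\<in>{q\<in>\<rat>. 0 \<le> q}. f k)"
proof (rule antisym)
  show "(INF k\<in>{0..}. f k) \<le> (INF k\<in>{q\<in>\<rat>. 0 \<le> q}. f k)"
    using bdd by (intro cINF_superset_mono) (auto intro: Rats_0)
  have bddQ: "bdd_below (f ` {q\<in>\<rat>. 0 \<le> q})"
    using bdd by (rule bdd_below_mono) auto
  show "(INF k\<in>{q\<in>\<rat>. 0 \<le> q}. f k) \<le> (INF k\<in>{0..}. f k)"
  proof (rule cINF_greatest)
    fix k :: real assume k: "k \<in> {0..}"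
    show "(INF k\<in>{q\<in>\<rat>. 0 \<le> q}. f k) \<le> f k"
    proof (rule field_le_epsilon)
      fix \<epsilon> :: real assume "0 < \<epsilon>"
      then obtain \<delta> where "0 < \<delta>" and \<delta>: "\<And>x. x \<in> {0..} \<Longrightarrow> dist x k < \<delta> \<Longrightarrow> dist (f x) (f k) < \<epsilon>"
        using cont k unfolding continuous_on_iff by blast
      obtain q where q: "q \<in> \<rat>" "k < q" "q < k + \<delta>"
        using Rats_dense_in_real[of k "k + \<delta>"] \<open>0 < \<delta>\<close> by auto
      have "(INF k\<in>{q\<in>\<rat>. 0 \<le> q}. f k) \<le> f q"
        using q k by (intro cINF_lower[OF bddQ]) auto
      also have "\<dots> \<le> f k + \<epsilon>"
        using \<delta>[of q] q k by (auto simp: dist_real_def)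
      finally show "(INF k\<in>{q\<in>\<rat>. 0 \<le> q}. f k) \<le> f k + \<epsilon>" .
    qed
  qed simp
qed

lemma borel_measurable_cone_objective:
  assumes "\<And>\<mu>. \<mu> < P \<Longrightarrow> (\<lambda>z. Y z \<mu>) \<in> borel_measurable M"
    and "\<And>\<mu>. \<mu> < P \<Longrightarrow> (\<lambda>z. T z \<mu>) \<in> borel_measurable M"
  shows "(\<lambda>z. cone_objective e P (Y z) (T z) k) \<in> borel_measurable M"
  unfolding cone_objective_def coord_cost_def excess_def
proof (intro borel_measurable_sum)
  fix \<mu> assume "\<mu> \<in> {..<P}"
  then have [measurable]: "(\<lambda>z. Y z \<mu>) \<in> borel_measurable M" "(\<lambda>z. T z \<mu>) \<in> borel_measurable M"
    using assms by auto
  show "(\<lambda>z. (max 0 (\<bar>T z \<mu> - k * Y z \<mu>\<bar> - e * k))\<^sup>2) \<in> borel_measurable M"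
    by measurable
qed

lemma borel_measurable_sqdist_cone:
  assumes "0 < r" and "0 \<le> e"
    and "\<And>\<mu>. \<mu> < P \<Longrightarrow> (\<lambda>z. Y z \<mu>) \<in> borel_measurable M"
    and "\<And>\<mu>. \<mu> < P \<Longrightarrow> (\<lambda>z. T z \<mu>) \<in> borel_measurable M"
  shows "(\<lambda>z. sqdist_cone r e P (Y z) (T z)) \<in> borel_measurable M"
proof -
  have "continuous_on {0..} (cone_objective e P y t)" for y t
    unfolding cone_objective_def[abs_def] coord_cost_def excess_def by (intro continuous_intros)
  then have "sqdist_cone r e P y t = (INF k\<in>{q\<in>\<rat>. 0 \<le> q}. cone_objective e P y t k)" for y t
    unfolding sqdist_cone_eq_INF[OF assms(1,2)]
    by (intro INF_nonneg_eq_INF_nonneg_Rats bdd_belowI[of _ 0]) (auto simp: cone_objective_nonneg)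
  moreover have "countable {q\<in>\<rat>. 0 \<le> (q::real)}"
    by (rule countable_subset[OF _ countable_rat]) auto
  ultimately show ?thesis
    using borel_measurable_cone_objective[OF assms(3,4)]
    by (simp add: borel_measurable_cINF_real)
qed

section \<open>Convex functions controlled on a grid\<close>

lemma convex_on_three_points:
  fixes G :: "real \<Rightarrow> real"
  assumes "convex_on S G" and "a \<in> S" and "c \<in> S" and "a < b" and "b < c"
  shows "(c - a) * G b \<le> (c - b) * G a + (b - a) * G c"
proof -
  define s where "s = (b - a) / (c - a)"
  have s: "0 \<le> s" "s \<le> 1"
    using assms by (auto simp: s_def)
  have sc: "s * (c - a) = b - a"
    using assms by (simp add: s_def)
  have "(1 - s) *\<^sub>R a + s *\<^sub>R c = a + s * (c - a)"
    by (simp add: algebra_simps)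
  then have "b = (1 - s) *\<^sub>R a + s *\<^sub>R c"
    by (simp add: sc)
  then have "G b \<le> (1 - s) * G a + s * G c"
    using convex_onD[OF assms(1) s assms(2,3)] by simp
  then have "(c - a) * G b \<le> (c - a) * ((1 - s) * G a + s * G c)"
    using assms by (intro mult_left_mono) auto
  also have "\<dots> = (c - a) * G a - s * (c - a) * G a + s * (c - a) * G c"
    by (simp add: algebra_simps)
  also have "\<dots> = (c - b) * G a + (b - a) * G c"
    unfolding sc by (simp add: algebra_simps)
  finally show ?thesis .
qed

lemma convex_on_power2_nonneg:
  fixes f :: "'a::real_vector \<Rightarrow> real"
  assumes f: "convex_on S f" and nonneg: "\<And>x. x \<in> S \<Longrightarrow> 0 \<le> f x"
  shows "convex_on S (\<lambda>x. (f x)\<^sup>2)"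
proof (rule convex_onI)
  fix s :: real and x y assume s: "0 < s" "s < 1" and xy: "x \<in> S" "y \<in> S"
  have "f ((1 - s) *\<^sub>R x + s *\<^sub>R y) \<le> (1 - s) * f x + s * f y"
    using convex_onD[OF f] s xy by simp
  then have "(f ((1 - s) *\<^sub>R x + s *\<^sub>R y))\<^sup>2 \<le> ((1 - s) * f x + s * f y)\<^sup>2"
    using convex_on_imp_convex[OF f] s xy by (intro power_mono nonneg) (auto simp: convex_def)
  also have "\<dots> \<le> (1 - s) * (f x)\<^sup>2 + s * (f y)\<^sup>2"
    using convex_onD[OF convex_power2, of s "f x" "f y"] s by simp
  finally show "(f ((1 - s) *\<^sub>R x + s *\<^sub>R y))\<^sup>2 \<le> (1 - s) * (f x)\<^sup>2 + s * (f y)\<^sup>2" .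
qed (use f in \<open>rule convex_on_imp_convex\<close>)

lemma convex_on_sum_fun:
  assumes "convex S" and "\<And>i. i \<in> I \<Longrightarrow> convex_on S (f i)"
  shows "convex_on S (\<lambda>x. \<Sum>i\<in>I. f i x)"
proof (cases "finite I")
  case True
  then show ?thesis
    using assms(2) by induction (auto simp: convex_on_const assms(1))
qed (simp add: convex_on_const assms(1))

lemma convex_on_excess_affine: "convex_on UNIV (\<lambda>k. excess (e * k) (t - k * y))"
proof (rule convex_onI)
  fix s a b :: real assume s: "0 < s" "s < 1"
  define k where "k = (1 - s) *\<^sub>R a + s *\<^sub>R b"
  have "t - k * y = (1 - s) * (t - a * y) + s * (t - b * y)"
    by (simp add: k_def algebra_simps)
  then have "\<bar>t - k * y\<bar> \<le> (1 - s) * \<bar>t - a * y\<bar> + s * \<bar>t - b * y\<bar>"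
    using s abs_triangle_ineq[of "(1 - s) * (t - a * y)" "s * (t - b * y)"] by (simp add: abs_mult)
  moreover have "(1 - s) * (\<bar>t - a * y\<bar> - e * a) \<le> (1 - s) * excess (e * a) (t - a * y)"
    and "s * (\<bar>t - b * y\<bar> - e * b) \<le> s * excess (e * b) (t - b * y)"
    using s by (intro mult_left_mono; simp add: excess_def)+
  moreover have "0 \<le> (1 - s) * excess (e * a) (t - a * y) + s * excess (e * b) (t - b * y)"
    using s by simp
  ultimately show "excess (e * k) (t - k * y) \<le> (1 - s) * excess (e * a) (t - a * y) + s * excess (e * b) (t - b * y)"
    unfolding excess_def[of "e * k"] by (simp add: k_def algebra_simps)
qed simp

lemma convex_on_cone_objective: "convex_on UNIV (cone_objective e P y t)"
  unfolding cone_objective_def[abs_def] coord_cost_def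
  by (intro convex_on_sum_fun convex_on_power2_nonneg convex_on_excess_affine) auto

lemma convex_on_right_of_chord:
  fixes G :: "real \<Rightarrow> real"
  assumes G: "convex_on S G" and "p \<in> S" and "k \<in> S" and "p < q" and "q \<le> k"
    and "G p \<le> G q + D"
  shows "(q - p) * G q \<le> (q - p) * G k + (k - q) * D"
proof (cases "q = k")
  case False
  then have "(k - p) * G q \<le> (k - q) * G p + (q - p) * G k"
    using convex_on_three_points[OF assms(1-3), of q] assms(4,5) by simp
  moreover have "(k - q) * G p \<le> (k - q) * (G q + D)"
    using assms(5,6) by (intro mult_left_mono) auto
  ultimately show ?thesis
    by (simp add: algebra_simps)
qed simp

lemma convex_on_left_of_chord:
  fixes G :: "real \<Rightarrow> real"
  assumes G: "convex_on S G" and "k \<in> S" and "s \<in> S" and "k \<le> q" and "q < s"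
    and "G s \<le> G q + D"
  shows "(s - q) * G q \<le> (s - q) * G k + (q - k) * D"
proof (cases "k = q")
  case False
  then have "(s - k) * G q \<le> (s - q) * G k + (q - k) * G s"
    using convex_on_three_points[OF assms(1-3), of q] assms(4,5) by simp
  moreover have "(q - k) * G s \<le> (q - k) * (G q + D)"
    using assms(4,6) by (intro mult_left_mono) auto
  ultimately show ?thesis
    by (simp add: algebra_simps)
qed simp

lemma nonneg_real_grid_cell:
  assumes "0 < h" and "0 \<le> k"
  obtains i :: nat where "real i * h \<le> k" and "k < real (Suc i) * h"
proof
  have i: "real (nat \<lfloor>k / h\<rfloor>) = of_int \<lfloor>k / h\<rfloor>"
    using assms by simp
  have "of_int \<lfloor>k / h\<rfloor> * h \<le> k / h * h"
    using assms by (intro mult_right_mono) auto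
  then show "real (nat \<lfloor>k / h\<rfloor>) * h \<le> k"
    using assms i by simp
  have "k / h < of_int \<lfloor>k / h\<rfloor> + 1"
    by linarith
  then have "k / h * h < (of_int \<lfloor>k / h\<rfloor> + 1) * h"
    using assms by (intro mult_strict_right_mono) auto
  then show "k < real (Suc (nat \<lfloor>k / h\<rfloor>)) * h"
    using assms i by (simp add: add.commute)
qed

text \<open>Each \<open>k \<ge> 0\<close> lies beyond a chord between neighbouring grid points (or beyond the chord
  \<open>[0, n h]\<close>), so convexity bounds \<open>G k\<close> from below by a grid value minus one increment.\<close>
lemma convex_on_grid_lower_bound:
  fixes G :: "real \<Rightarrow> real"
  assumes G: "convex_on {0..} G" and h: "0 < h" and n: "2 \<le> n"
    and end_ge: "G 0 \<le> G (real n * h)"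
    and steps: "\<And>i. i < n \<Longrightarrow> \<bar>G (real (Suc i) * h) - G (real i * h)\<bar> \<le> D"
    and grid: "\<And>i. i \<le> n \<Longrightarrow> m \<le> G (real i * h)"
    and k: "0 \<le> k"
  shows "m - D \<le> G k"
proof -
  have "0 \<le> D"
    using steps[of 0] n by linarith
  have chord: "G q - D \<le> G k" if "h * G q \<le> h * G k + y * D" and "y \<le> h" for y q
  proof -
    have "h * G q \<le> h * (G k + D)"
      using that(1) mult_right_mono[OF that(2) \<open>0 \<le> D\<close>] by (simp add: algebra_simps)
    then show ?thesis
      using h by (simp add: mult_le_cancel_left_pos)
  qed
  obtain i where i: "real i * h \<le> k" "k < real (Suc i) * h"
    using nonneg_real_grid_cell[OF h k] .
  show ?thesis
  proof (cases "real n * h \<le> k")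
    case True
    with convex_on_right_of_chord[OF G, of 0 k "real n * h" 0] end_ge h n
    have "real n * h * G (real n * h) \<le> real n * h * G k"
      by simp
    then have "G (real n * h) \<le> G k"
      using h n by (simp add: mult_le_cancel_left_pos)
    then show ?thesis
      using grid[of n] \<open>0 \<le> D\<close> by linarith
  next
    case False
    then have "real i * h < real n * h"
      using i by linarith
    then have "i < n"
      using h by (simp add: mult_less_cancel_right_pos)
    show ?thesis
    proof (cases i)
      case 0
      have "h * G h \<le> h * G k + (h - k) * D"
        using convex_on_left_of_chord[OF G, of k "2 * h" h D] steps[of 1] 0 k h i n
        by (simp add: abs_le_iff)
      then have "G h - D \<le> G k"
        by (rule chord) (use k in simp)
      then show ?thesis
        using grid[of 1] n by simp
    next
      case (Suc j)
      have "h * G (real i * h) \<le> h * G k + (k - real i * h) * D"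
        using convex_on_right_of_chord[OF G, of "real j * h" k "real i * h" D] steps[of j] Suc \<open>i < n\<close> h i k
        by (simp add: abs_le_iff algebra_simps)
      then have "G (real i * h) - D \<le> G k"
        by (rule chord) (use i in \<open>simp add: algebra_simps\<close>)
      then show ?thesis
        using grid[of i] \<open>i < n\<close> by simp
    qed
  qed
qed

text \<open>Off the event that \<open>G\<close> is \<open>d\<close>-close to \<open>F\<close> on the grid, the quadratic penalty already
  exceeds \<open>\<bar>c\<bar>\<close>; after integration this is Chebyshev's inequality.\<close>
lemma convex_on_lower_bound_grid_deviation:
  fixes G F :: "real \<Rightarrow> real"
  assumes G: "convex_on {0..} G" and G_nonneg: "\<And>k. 0 \<le> k \<Longrightarrow> 0 \<le> G k"
    and h: "0 < h" and n: "2 \<le> n" and d: "0 < d"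
    and end_ge: "F 0 + 2 * d \<le> F (real n * h)"
    and steps: "\<And>i. i < n \<Longrightarrow> \<bar>F (real (Suc i) * h) - F (real i * h)\<bar> \<le> D"
    and grid: "\<And>i. i \<le> n \<Longrightarrow> m \<le> F (real i * h)"
    and c: "c \<le> m - D - 3 * d"
    and k: "0 \<le> k"
  shows "c - \<bar>c\<bar> / d\<^sup>2 * (\<Sum>i\<le>n. (G (real i * h) - F (real i * h))\<^sup>2) \<le> G k"
proof (cases "\<forall>i\<le>n. \<bar>G (real i * h) - F (real i * h)\<bar> \<le> d")
  case True
  have "m - d - (D + 2 * d) \<le> G k"
  proof (rule convex_on_grid_lower_bound[OF G h n _ _ _ k])
    show "G 0 \<le> G (real n * h)"
      using True[rule_format, of 0] True[rule_format, of n] end_ge by (auto simp: abs_le_iff)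
    show "\<bar>G (real (Suc i) * h) - G (real i * h)\<bar> \<le> D + 2 * d" if "i < n" for i
      using True[rule_format, of i] True[rule_format, of "Suc i"] steps[OF that] that
      by (auto simp: abs_le_iff)
    show "m - d \<le> G (real i * h)" if "i \<le> n" for i
      using True[rule_format, of i] grid[OF that] that by (auto simp: abs_le_iff)
  qed
  moreover have "0 \<le> \<bar>c\<bar> / d\<^sup>2 * (\<Sum>i\<le>n. (G (real i * h) - F (real i * h))\<^sup>2)"
    by (intro mult_nonneg_nonneg sum_nonneg) auto
  ultimately show ?thesis
    using c by linarith
next
  case False
  then obtain i where i: "i \<le> n" "d < \<bar>G (real i * h) - F (real i * h)\<bar>"
    by auto
  have "d\<^sup>2 \<le> (G (real i * h) - F (real i * h))\<^sup>2"
    using i d by (metis less_imp_le power2_abs power_mono)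
  also have "\<dots> \<le> (\<Sum>i\<le>n. (G (real i * h) - F (real i * h))\<^sup>2)"
    using i by (intro member_le_sum) auto
  finally have "\<bar>c\<bar> / d\<^sup>2 * d\<^sup>2 \<le> \<bar>c\<bar> / d\<^sup>2 * (\<Sum>i\<le>n. (G (real i * h) - F (real i * h))\<^sup>2)"
    by (intro mult_left_mono) auto
  then show ?thesis
    using d G_nonneg[OF k] by simp
qed

section \<open>Gaussian and product measures\<close>

definition gauss :: "real \<Rightarrow> real measure" where
  "gauss s = density lborel (normal_density 0 s)"

lemma gauss_vec_eq_PiM_gauss: "gauss_vec P s = PiM {..<P} (\<lambda>_. gauss s)"
  by (simp add: gauss_vec_def gauss_def)

lemma prob_space_gauss: "0 < s \<Longrightarrow> prob_space (gauss s)"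
  unfolding gauss_def by (rule prob_space_normal_density)

lemma sets_gauss [measurable_cong, simp]: "sets (gauss s) = sets borel"
  by (simp add: gauss_def)

lemma space_gauss [simp]: "space (gauss s) = UNIV"
  by (simp add: gauss_def)

lemma measurable_gauss_source [simp]: "measurable (gauss s) N = measurable borel N"
  by (rule measurable_cong_sets) auto

lemma measurable_gauss_target [simp]: "measurable N (gauss s) = measurable N borel"
  by (rule measurable_cong_sets) auto

lemma integrable_gauss_iff:
  fixes f :: "real \<Rightarrow> real"
  assumes "f \<in> borel_measurable borel"
  shows "integrable (gauss s) f \<longleftrightarrow> integrable lborel (\<lambda>x. normal_density 0 s x * f x)"
  unfolding gauss_def using assms by (subst integrable_density) auto

lemma integral_gauss:
  fixes f :: "real \<Rightarrow> real"
  assumes "f \<in> borel_measurable borel"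
  shows "integral\<^sup>L (gauss s) f = (\<integral>x. normal_density 0 s x * f x \<partial>lborel)"
  unfolding gauss_def using assms by (subst integral_density) auto

lemma integrable_gauss_quartic_bound:
  fixes f :: "real \<Rightarrow> real"
  assumes "0 < s" and [measurable]: "f \<in> borel_measurable borel"
    and bound: "\<And>x. \<bar>f x\<bar> \<le> A * (1 + x ^ 4)"
  shows "integrable (gauss s) f"
proof (rule Bochner_Integration.integrable_bound)
  have "integrable lborel (\<lambda>x. A * (normal_density 0 s x + normal_density 0 s x * (x - 0) ^ 4))"
    using assms(1) by (intro integrable_mult_right Bochner_Integration.integrable_add
        integrable_normal_moment integrable_normal_density)
  then show "integrable (gauss s) (\<lambda>x. A * (1 + x ^ 4))"
    by (subst integrable_gauss_iff) (auto simp: algebra_simps)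
  show "AE x in gauss s. norm (f x) \<le> norm (A * (1 + x ^ 4))"
    using bound by (auto intro: order_trans[OF _ abs_ge_self])
qed simp

lemma power2_le_one_plus_power4: "(x::real)\<^sup>2 \<le> 1 + x ^ 4"
proof -
  have "(x\<^sup>2 - 1)\<^sup>2 = x ^ 4 - 2 * x\<^sup>2 + 1"
    by (simp add: power2_eq_square power4_eq_xxxx algebra_simps)
  moreover have "0 \<le> (x\<^sup>2 - 1)\<^sup>2" "0 \<le> x\<^sup>2"
    by simp_all
  ultimately show ?thesis
    by linarith
qed

lemma
  fixes f :: "'a \<Rightarrow> real"
  assumes "prob_space M" and "i \<in> I" and "f \<in> borel_measurable M"
  shows integrable_PiM_component_iff:
      "integrable (PiM I (\<lambda>_. M)) (\<lambda>x. f (x i)) \<longleftrightarrow> integrable M f"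
    and integral_PiM_component: "(\<integral>x. f (x i) \<partial>PiM I (\<lambda>_. M)) = integral\<^sup>L M f"
proof -
  have distr: "distr (PiM I (\<lambda>_. M)) M (\<lambda>x. x i) = M"
    using assms by (intro distr_PiM_component) auto
  have "(\<lambda>x. x i) \<in> measurable (PiM I (\<lambda>_. M)) M"
    using assms by (intro measurable_component_singleton)
  from integrable_distr_eq[OF this assms(3)] integral_distr[OF this assms(3)]
  show "integrable (PiM I (\<lambda>_. M)) (\<lambda>x. f (x i)) \<longleftrightarrow> integrable M f"
    and "(\<integral>x. f (x i) \<partial>PiM I (\<lambda>_. M)) = integral\<^sup>L M f"
    unfolding distr by simp_all
qed

lemma
  fixes f g :: "'a \<Rightarrow> real"
  assumes "prob_space M" and "finite I" and "i \<in> I" and "j \<in> I" and "i \<noteq> j"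
    and "integrable M f" and "integrable M g"
  shows integrable_PiM_two_components: "integrable (PiM I (\<lambda>_. M)) (\<lambda>x. f (x i) * g (x j))"
    and integral_PiM_two_components:
      "(\<integral>x. f (x i) * g (x j) \<partial>PiM I (\<lambda>_. M)) = integral\<^sup>L M f * integral\<^sup>L M g"
proof -
  interpret prob_space M by fact
  interpret product_sigma_finite "\<lambda>_. M"
    by (simp add: product_sigma_finite_def sigma_finite_measure_axioms)
  define F where "F l = (if l = i then f else if l = j then g else (\<lambda>_. 1))" for l
  have split: "(\<Prod>l\<in>I. H l) = H i * H j" if "\<And>l. l \<in> I - {i, j} \<Longrightarrow> H l = 1" for H :: "'b \<Rightarrow> real"
  proof -
    have "(\<Prod>l\<in>I. H l) = (\<Prod>l\<in>{i, j}. H l) * (\<Prod>l\<in>I - {i, j}. H l)"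
      using assms(2-4) by (metis Diff_disjoint Diff_partition empty_subsetI insert_subsetI prod.union_disjoint
          finite_Diff finite_insert infinite_imp_nonempty)
    then show ?thesis
      using that assms(5) by (simp add: prod.neutral)
  qed
  have prod_F: "(\<Prod>l\<in>I. F l (x l)) = f (x i) * g (x j)" for x
    using assms(5) by (subst split) (auto simp: F_def)
  have "integrable (PiM I (\<lambda>_. M)) (\<lambda>x. \<Prod>l\<in>I. F l (x l))"
    using assms by (intro product_integrable_prod) (auto simp: F_def)
  then show "integrable (PiM I (\<lambda>_. M)) (\<lambda>x. f (x i) * g (x j))"
    by (simp add: prod_F)
  have "(\<integral>x. (\<Prod>l\<in>I. F l (x l)) \<partial>PiM I (\<lambda>_. M)) = (\<Prod>l\<in>I. integral\<^sup>L M (F l))"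
    using assms by (intro product_integral_prod) (auto simp: F_def)
  also have "\<dots> = integral\<^sup>L M f * integral\<^sup>L M g"
    using assms(5) by (subst split) (auto simp: F_def prob_space)
  finally show "(\<integral>x. f (x i) * g (x j) \<partial>PiM I (\<lambda>_. M)) = integral\<^sup>L M f * integral\<^sup>L M g"
    by (simp add: prod_F)
qed

lemma
  fixes f :: "'b \<Rightarrow> 'a \<Rightarrow> real"
  assumes M: "prob_space M" and I: "finite I"
    and meas: "\<And>i. i \<in> I \<Longrightarrow> f i \<in> borel_measurable M"
    and int: "\<And>i. i \<in> I \<Longrightarrow> integrable M (f i)"
    and int2: "\<And>i. i \<in> I \<Longrightarrow> integrable M (\<lambda>x. (f i x)\<^sup>2)"
  shows integrable_PiM_sum_power2: "integrable (PiM I (\<lambda>_. M)) (\<lambda>x. (\<Sum>i\<in>I. f i (x i))\<^sup>2)"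
    and integral_PiM_sum_power2: "(\<integral>x. (\<Sum>i\<in>I. f i (x i))\<^sup>2 \<partial>PiM I (\<lambda>_. M)) =
      (\<Sum>i\<in>I. \<integral>x. (f i x)\<^sup>2 \<partial>M) + (\<Sum>i\<in>I. \<Sum>j\<in>I - {i}. integral\<^sup>L M (f i) * integral\<^sup>L M (f j))"
proof -
  let ?PiM = "PiM I (\<lambda>_. M)"
  have expand: "(\<Sum>i\<in>I. f i (x i))\<^sup>2 =
      (\<Sum>i\<in>I. (f i (x i))\<^sup>2) + (\<Sum>i\<in>I. \<Sum>j\<in>I - {i}. f i (x i) * f j (x j))" for x
    using I by (simp add: power2_eq_square sum_product sum.remove sum.distrib)
  have diag: "integrable ?PiM (\<lambda>x. (f i (x i))\<^sup>2)" "(\<integral>x. (f i (x i))\<^sup>2 \<partial>?PiM) = (\<integral>x. (f i x)\<^sup>2 \<partial>M)"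
    if "i \<in> I" for i
    using integrable_PiM_component_iff[OF M that, of "\<lambda>x. (f i x)\<^sup>2"]
      integral_PiM_component[OF M that, of "\<lambda>x. (f i x)\<^sup>2"] meas[OF that] int2[OF that]
    by auto
  have off: "integrable ?PiM (\<lambda>x. f i (x i) * f j (x j))"
      "(\<integral>x. f i (x i) * f j (x j) \<partial>?PiM) = integral\<^sup>L M (f i) * integral\<^sup>L M (f j)"
    if "i \<in> I" "j \<in> I - {i}" for i j
    using that integrable_PiM_two_components[OF M I, of i j] integral_PiM_two_components[OF M I, of i j] int
    by auto
  have int_diag: "integrable ?PiM (\<lambda>x. \<Sum>i\<in>I. (f i (x i))\<^sup>2)"
    using diag(1) by (rule Bochner_Integration.integrable_sum)
  have int_off: "integrable ?PiM (\<lambda>x. \<Sum>j\<in>I - {i}. f i (x i) * f j (x j))" if "i \<in> I" for i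
    by (rule Bochner_Integration.integrable_sum) (use off(1) that in auto)
  have int_off_all: "integrable ?PiM (\<lambda>x. \<Sum>i\<in>I. \<Sum>j\<in>I - {i}. f i (x i) * f j (x j))"
    using int_off by (rule Bochner_Integration.integrable_sum)
  show "integrable ?PiM (\<lambda>x. (\<Sum>i\<in>I. f i (x i))\<^sup>2)"
    unfolding expand by (rule Bochner_Integration.integrable_add[OF int_diag int_off_all])
  have "(\<integral>x. (\<Sum>i\<in>I. f i (x i))\<^sup>2 \<partial>?PiM) = (\<integral>x. (\<Sum>i\<in>I. (f i (x i))\<^sup>2) \<partial>?PiM) +
      (\<integral>x. (\<Sum>i\<in>I. \<Sum>j\<in>I - {i}. f i (x i) * f j (x j)) \<partial>?PiM)"
    unfolding expand by (rule Bochner_Integration.integral_add[OF int_diag int_off_all])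
  also have "(\<integral>x. (\<Sum>i\<in>I. (f i (x i))\<^sup>2) \<partial>?PiM) = (\<Sum>i\<in>I. \<integral>x. (f i x)\<^sup>2 \<partial>M)"
    using diag by (simp add: Bochner_Integration.integral_sum)
  also have "(\<integral>x. (\<Sum>i\<in>I. \<Sum>j\<in>I - {i}. f i (x i) * f j (x j)) \<partial>?PiM) =
      (\<Sum>i\<in>I. \<Sum>j\<in>I - {i}. integral\<^sup>L M (f i) * integral\<^sup>L M (f j))"
    using int_off off by (simp add: Bochner_Integration.integral_sum)
  finally show "(\<integral>x. (\<Sum>i\<in>I. f i (x i))\<^sup>2 \<partial>?PiM) =
      (\<Sum>i\<in>I. \<integral>x. (f i x)\<^sup>2 \<partial>M) + (\<Sum>i\<in>I. \<Sum>j\<in>I - {i}. integral\<^sup>L M (f i) * integral\<^sup>L M (f j))" .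
qed

lemma
  fixes m :: "'a \<Rightarrow> real"
  assumes M: "prob_space M" and I: "finite I" and int: "integrable M m" and centred: "integral\<^sup>L M m = 0"
  shows integrable_PiM_off_diagonal:
      "integrable (PiM I (\<lambda>_. M)) (\<lambda>y. \<Sum>i\<in>I. \<Sum>j\<in>I - {i}. m (y i) * m (y j))"
    and integral_PiM_off_diagonal:
      "(\<integral>y. (\<Sum>i\<in>I. \<Sum>j\<in>I - {i}. m (y i) * m (y j)) \<partial>PiM I (\<lambda>_. M)) = 0"
proof -
  have pair: "integrable (PiM I (\<lambda>_. M)) (\<lambda>y. m (y i) * m (y j))"
      "(\<integral>y. m (y i) * m (y j) \<partial>PiM I (\<lambda>_. M)) = 0"
    if "i \<in> I" and "j \<in> I - {i}" for i j
    using integrable_PiM_two_components[OF M I _ _ _ int int, where i = i and j = j]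
      integral_PiM_two_components[OF M I _ _ _ int int, where i = i and j = j] that centred
    by auto
  have row: "integrable (PiM I (\<lambda>_. M)) (\<lambda>y. \<Sum>j\<in>I - {i}. m (y i) * m (y j))" if "i \<in> I" for i
    by (rule Bochner_Integration.integrable_sum) (rule pair(1)[OF that])
  show "integrable (PiM I (\<lambda>_. M)) (\<lambda>y. \<Sum>i\<in>I. \<Sum>j\<in>I - {i}. m (y i) * m (y j))"
    using row by (rule Bochner_Integration.integrable_sum)
  have "(\<integral>y. (\<Sum>j\<in>I - {i}. m (y i) * m (y j)) \<partial>PiM I (\<lambda>_. M)) = 0" if "i \<in> I" for i
    using pair[OF that] by (simp add: Bochner_Integration.integral_sum)
  then show "(\<integral>y. (\<Sum>i\<in>I. \<Sum>j\<in>I - {i}. m (y i) * m (y j)) \<partial>PiM I (\<lambda>_. M)) = 0"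
    using row by (simp add: Bochner_Integration.integral_sum)
qed

lemma borel_measurable_gauss_inner:
  fixes \<phi> :: "real \<Rightarrow> real \<Rightarrow> real"
  assumes "0 < s" and meas: "(\<lambda>(a, x). \<phi> a x) \<in> borel_measurable (borel \<Otimes>\<^sub>M borel)"
  shows "(\<lambda>a. \<integral>x. \<phi> a x \<partial>gauss s) \<in> borel_measurable borel"
proof -
  interpret gauss: prob_space "gauss s"
    using assms(1) by (rule prob_space_gauss)
  have "sets (borel \<Otimes>\<^sub>M gauss s) = sets (borel \<Otimes>\<^sub>M borel)"
    by (rule sets_pair_measure_cong) auto
  then have "(\<lambda>(a, x). \<phi> a x) \<in> borel_measurable (borel \<Otimes>\<^sub>M gauss s)"
    by (subst measurable_cong_sets[OF _ refl]) (assumption, rule meas)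
  then show ?thesis
    by (rule gauss.borel_measurable_lebesgue_integral)
qed

lemma integrable_gauss_outer:
  fixes \<phi> :: "real \<Rightarrow> real \<Rightarrow> real"
  assumes s: "0 < s" and s': "0 < s'"
    and meas: "(\<lambda>(a, x). \<phi> a x) \<in> borel_measurable (borel \<Otimes>\<^sub>M borel)"
    and bound: "\<And>a x. \<bar>\<phi> a x\<bar> \<le> A * (1 + a ^ 4) * (1 + x ^ 4)"
  shows "integrable (gauss s') (\<lambda>a. \<integral>x. \<phi> a x \<partial>gauss s)"
proof (rule integrable_gauss_quartic_bound[OF s' borel_measurable_gauss_inner[OF s meas]])
  have [measurable]: "\<phi> a \<in> borel_measurable borel" for a
    using measurable_Pair2[OF meas, of a] by simp
  have "integrable (gauss s) (\<lambda>x. 1 + x ^ 4)"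
    by (rule integrable_gauss_quartic_bound[OF s, where A = 1]) auto
  moreover have "integrable (gauss s) (\<phi> a)" for a
    by (rule integrable_gauss_quartic_bound[OF s _ bound]) simp
  ultimately have "\<bar>\<integral>x. \<phi> a x \<partial>gauss s\<bar> \<le> (\<integral>x. A * (1 + a ^ 4) * (1 + x ^ 4) \<partial>gauss s)" for a
    using bound by (intro integral_abs_bound_integral) auto
  then show "\<bar>\<integral>x. \<phi> a x \<partial>gauss s\<bar> \<le> A * (\<integral>x. 1 + x ^ 4 \<partial>gauss s) * (1 + a ^ 4)" for a
    by (simp add: ac_simps)
qed

lemma distr_gauss_scale:
  assumes "0 < s"
  shows "distr (gauss 1) borel (\<lambda>z. s * z) = gauss s"
proof -
  interpret prob_space "gauss 1"
    by (rule prob_space_gauss) simp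
  have "distributed (gauss 1) lborel (\<lambda>z. z) (normal_density 0 1)"
    by (simp add: distributed_def gauss_def distr_id2)
  from normal_density_affine[OF this, of s 0] assms
  have "distr (gauss 1) lborel (\<lambda>z. s * z) = gauss s"
    by (simp add: distributed_def gauss_def)
  moreover have "distr (gauss 1) borel (\<lambda>z. s * z) = distr (gauss 1) lborel (\<lambda>z. s * z)"
    by (rule distr_cong) auto
  ultimately show ?thesis
    by simp
qed

lemma normal_density_scale:
  assumes "k \<noteq> 0"
  shows "normal_density 0 sg (- w / k) / \<bar>k\<bar> = normal_density 0 (\<bar>k\<bar> * sg) w"
  using assms by (simp add: normal_density_def real_sqrt_mult power_mult_distrib power_divide field_simps)

lemma nn_integral_normal_density_convolution:
  assumes sg: "0 < sg" and k: "k \<noteq> 0"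
  shows "(\<integral>\<^sup>+a. ennreal (normal_density 0 sg a * normal_density 0 1 (u + k * a)) \<partial>lborel) =
    normal_density 0 (sqrt (1 + (k * sg)\<^sup>2)) u"
proof -
  have "(\<integral>\<^sup>+a. ennreal (normal_density 0 sg a * normal_density 0 1 (u + k * a)) \<partial>lborel) =
      ennreal (1 / \<bar>k\<bar>) * (\<integral>\<^sup>+w. ennreal (normal_density 0 sg (- w / k) * normal_density 0 1 (u - w)) \<partial>lborel)"
    using k by (subst nn_integral_real_affine[where c = "- 1 / k" and t = 0]) (auto simp: abs_divide)
  also have "\<dots> = (\<integral>\<^sup>+w. ennreal (normal_density 0 1 (u - w) * normal_density 0 (\<bar>k\<bar> * sg) w) \<partial>lborel)"
    using k
    by (subst nn_integral_cmult[symmetric])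
      (auto intro!: nn_integral_cong simp: ennreal_mult'[symmetric] normal_density_scale[symmetric])
  also have "\<dots> = normal_density 0 (sqrt (1 + (k * sg)\<^sup>2)) u"
    using fun_cong[OF conv_normal_density_zero_mean[of 1 "\<bar>k\<bar> * sg"], of u] k sg
    by (simp add: power_mult_distrib)
  finally show ?thesis .
qed

lemma nn_integral_gauss_convolution:
  fixes \<psi> :: "real \<Rightarrow> ennreal"
  assumes sg: "0 < sg" and [measurable]: "\<psi> \<in> borel_measurable borel"
  shows "(\<integral>\<^sup>+a. (\<integral>\<^sup>+x. \<psi> (x - k * a) \<partial>gauss 1) \<partial>gauss sg) =
    (\<integral>\<^sup>+u. \<psi> u \<partial>gauss (sqrt (1 + (k * sg)\<^sup>2)))"
proof (cases "k = 0")
  case True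
  interpret prob_space "gauss sg"
    using sg by (rule prob_space_gauss)
  show ?thesis
    using True emeasure_space_1 by simp
next
  case False
  define \<alpha> where "\<alpha> = sqrt (1 + (k * sg)\<^sup>2)"
  note conv = nn_integral_normal_density_convolution[OF sg False, folded \<alpha>_def]
  have "(\<integral>\<^sup>+a. (\<integral>\<^sup>+x. \<psi> (x - k * a) \<partial>gauss 1) \<partial>gauss sg) =
      (\<integral>\<^sup>+a. normal_density 0 sg a * (\<integral>\<^sup>+x. normal_density 0 1 x * \<psi> (x - k * a) \<partial>lborel) \<partial>lborel)"
    by (simp add: gauss_def nn_integral_density)
  also have "\<dots> = (\<integral>\<^sup>+a. (\<integral>\<^sup>+u. normal_density 0 sg a * normal_density 0 1 (u + k * a) * \<psi> u \<partial>lborel) \<partial>lborel)"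
  proof (rule nn_integral_cong)
    fix a
    have "(\<integral>\<^sup>+x. normal_density 0 1 x * \<psi> (x - k * a) \<partial>lborel) =
        (\<integral>\<^sup>+u. normal_density 0 1 (u + k * a) * \<psi> u \<partial>lborel)"
      using nn_integral_real_affine[of "\<lambda>x. normal_density 0 1 x * \<psi> (x - k * a)" 1 "k * a"]
      by (simp add: add.commute)
    then show "normal_density 0 sg a * (\<integral>\<^sup>+x. normal_density 0 1 x * \<psi> (x - k * a) \<partial>lborel) =
        (\<integral>\<^sup>+u. normal_density 0 sg a * normal_density 0 1 (u + k * a) * \<psi> u \<partial>lborel)"
      by (simp add: nn_integral_cmult[symmetric] ennreal_mult' mult.assoc)
  qed
  also have "\<dots> = (\<integral>\<^sup>+u. (\<integral>\<^sup>+a. normal_density 0 sg a * normal_density 0 1 (u + k * a) * \<psi> u \<partial>lborel) \<partial>lborel)"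
    by (rule lborel_pair.Fubini') measurable
  also have "\<dots> = (\<integral>\<^sup>+u. normal_density 0 \<alpha> u * \<psi> u \<partial>lborel)"
    by (intro nn_integral_cong) (simp add: nn_integral_multc ennreal_mult'[symmetric] conv)
  also have "\<dots> = (\<integral>\<^sup>+u. \<psi> u \<partial>gauss \<alpha>)"
    by (simp add: gauss_def nn_integral_density)
  finally show ?thesis
    by (simp add: \<alpha>_def)
qed

section \<open>The averaged coordinate cost\<close>

lemma excess_power2_le: "0 \<le> b \<Longrightarrow> (excess b u)\<^sup>2 \<le> u\<^sup>2"
  by (metis excess_le_abs excess_nonneg power2_abs power_mono)

lemma power2_add_le: "(p + q)\<^sup>2 \<le> 2 * p\<^sup>2 + 2 * (q::real)\<^sup>2"
proof -
  have "2 * p\<^sup>2 + 2 * q\<^sup>2 - (p + q)\<^sup>2 = (p - q)\<^sup>2"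
    by (simp add: power2_eq_square algebra_simps)
  then show ?thesis
    using zero_le_power2[of "p - q"] by linarith
qed

lemma
  assumes "0 \<le> e" and "0 \<le> k"
  shows coord_cost_quartic_bound: "\<bar>coord_cost e k a x\<bar> \<le> (2 + 2 * k\<^sup>2) * (1 + a ^ 4) * (1 + x ^ 4)"
    and coord_cost_deviation_quartic_bound:
      "\<bar>(coord_cost e k a x - c)\<^sup>2\<bar> \<le> (16 + 16 * k ^ 4 + 2 * c\<^sup>2) * (1 + a ^ 4) * (1 + x ^ 4)"
proof -
  define W where "W = (1 + a ^ 4) * (1 + x ^ 4)"
  have x4: "0 \<le> x ^ 4" and a4: "0 \<le> a ^ 4"
    by (simp_all add: zero_le_even_power)
  have "W = 1 + x ^ 4 + a ^ 4 * (1 + x ^ 4)" "W = 1 + a ^ 4 + x ^ 4 * (1 + a ^ 4)"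
    by (simp_all add: W_def algebra_simps)
  moreover have "0 \<le> a ^ 4 * (1 + x ^ 4)" "0 \<le> x ^ 4 * (1 + a ^ 4)"
    using x4 a4 by simp_all
  ultimately have W: "1 + x ^ 4 \<le> W" "1 + a ^ 4 \<le> W"
    by linarith+
  have cost: "coord_cost e k a x \<le> 2 * x\<^sup>2 + 2 * (k\<^sup>2 * a\<^sup>2)"
    using excess_power2_le[of "e * k" "x - k * a"] power2_add_le[of x "- (k * a)"] assms
    by (simp add: coord_cost_def power_mult_distrib)
  have "k\<^sup>2 * a\<^sup>2 \<le> k\<^sup>2 * W"
    using power2_le_one_plus_power4[of a] W by (intro mult_left_mono) auto
  moreover have "(2 + 2 * k\<^sup>2) * W = 2 * W + 2 * (k\<^sup>2 * W)"
    by (simp add: algebra_simps)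
  ultimately have "\<bar>coord_cost e k a x\<bar> \<le> (2 + 2 * k\<^sup>2) * W"
    using cost power2_le_one_plus_power4[of x] W by simp
  then show "\<bar>coord_cost e k a x\<bar> \<le> (2 + 2 * k\<^sup>2) * (1 + a ^ 4) * (1 + x ^ 4)"
    by (simp add: W_def mult.assoc)
  have "(coord_cost e k a x)\<^sup>2 \<le> (2 * x\<^sup>2 + 2 * (k\<^sup>2 * a\<^sup>2))\<^sup>2"
    using cost by (intro power_mono) auto
  also have "\<dots> \<le> 8 * x ^ 4 + 8 * (k ^ 4 * a ^ 4)"
    using power2_add_le[of "2 * x\<^sup>2" "2 * (k\<^sup>2 * a\<^sup>2)"]
    by (simp add: power_mult_distrib flip: power_mult)
  finally have "(coord_cost e k a x - c)\<^sup>2 \<le> 16 * x ^ 4 + 16 * (k ^ 4 * a ^ 4) + 2 * c\<^sup>2"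
    using power2_add_le[of "coord_cost e k a x" "- c"] by simp
  moreover have "k ^ 4 * a ^ 4 \<le> k ^ 4 * W" "c\<^sup>2 * 1 \<le> c\<^sup>2 * W"
    using W a4 x4 by (intro mult_left_mono; simp add: zero_le_even_power; linarith)+
  moreover have "(16 + 16 * k ^ 4 + 2 * c\<^sup>2) * W = 16 * W + 16 * (k ^ 4 * W) + 2 * (c\<^sup>2 * W)"
    by (simp add: algebra_simps)
  ultimately have "\<bar>(coord_cost e k a x - c)\<^sup>2\<bar> \<le> (16 + 16 * k ^ 4 + 2 * c\<^sup>2) * W"
    using W by simp
  then show "\<bar>(coord_cost e k a x - c)\<^sup>2\<bar> \<le> (16 + 16 * k ^ 4 + 2 * c\<^sup>2) * (1 + a ^ 4) * (1 + x ^ 4)"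
    by (simp add: W_def mult.assoc)
qed

lemma borel_measurable_coord_cost:
  "(\<lambda>(a, x). coord_cost e k a x) \<in> borel_measurable (borel \<Otimes>\<^sub>M borel)"
  unfolding coord_cost_def excess_def by measurable

lemma borel_measurable_coord_cost_fixed: "coord_cost e k a \<in> borel_measurable borel"
  unfolding coord_cost_def[abs_def] excess_def by measurable

lemma
  assumes "0 \<le> e" and "0 \<le> k"
  shows integrable_coord_cost: "integrable (gauss 1) (coord_cost e k a)"
    and integrable_coord_cost_deviation: "integrable (gauss 1) (\<lambda>x. (coord_cost e k a x - c)\<^sup>2)"
proof -
  note [measurable] = borel_measurable_coord_cost_fixed
  show "integrable (gauss 1) (coord_cost e k a)"
    by (rule integrable_gauss_quartic_bound[OF zero_less_one _ coord_cost_quartic_bound[OF assms]]) measurable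
  show "integrable (gauss 1) (\<lambda>x. (coord_cost e k a x - c)\<^sup>2)"
    by (rule integrable_gauss_quartic_bound[OF zero_less_one _ coord_cost_deviation_quartic_bound[OF assms]])
      measurable
qed

lemma borel_measurable_coord_cost_deviation:
  "(\<lambda>(a, x). (coord_cost e k a x - c)\<^sup>2) \<in> borel_measurable (borel \<Otimes>\<^sub>M borel)"
  unfolding coord_cost_def excess_def by measurable

lemma
  assumes "0 < sg" and "0 \<le> e" and "0 \<le> k"
  shows integrable_coord_cost_mean: "integrable (gauss sg) (\<lambda>a. \<integral>x. coord_cost e k a x \<partial>gauss 1)"
    and integrable_coord_cost_deviation_mean:
      "integrable (gauss sg) (\<lambda>a. \<integral>x. (coord_cost e k a x - c)\<^sup>2 \<partial>gauss 1)"
  using integrable_gauss_outer[OF zero_less_one assms(1) borel_measurable_coord_cost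
      coord_cost_quartic_bound[OF assms(2,3)]]
    integrable_gauss_outer[OF zero_less_one assms(1) borel_measurable_coord_cost_deviation
      coord_cost_deviation_quartic_bound[OF assms(2,3)]]
  by simp_all

lemma borel_measurable_coord_cost_mean:
  "(\<lambda>a. \<integral>x. coord_cost e k a x \<partial>gauss 1) \<in> borel_measurable borel"
  using borel_measurable_gauss_inner[OF zero_less_one borel_measurable_coord_cost] by simp

lemma borel_measurable_coord_cost_deviation_mean:
  "(\<lambda>a. \<integral>x. (coord_cost e k a x - c)\<^sup>2 \<partial>gauss 1) \<in> borel_measurable borel"
  using borel_measurable_gauss_inner[OF zero_less_one borel_measurable_coord_cost_deviation] by simp

definition objective_mean :: "real \<Rightarrow> real \<Rightarrow> real \<Rightarrow> real" where
  "objective_mean sg e k = (\<integral>a. (\<integral>x. coord_cost e k a x \<partial>gauss 1) \<partial>gauss sg)"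

definition objective_variance :: "real \<Rightarrow> real \<Rightarrow> real \<Rightarrow> real" where
  "objective_variance sg e k =
     (\<integral>a. (\<integral>x. (coord_cost e k a x - objective_mean sg e k)\<^sup>2 \<partial>gauss 1) \<partial>gauss sg)"

lemma integrable_gauss_excess_power2:
  assumes "0 \<le> b"
  shows "integrable (gauss 1) (\<lambda>z. (excess b (s * z))\<^sup>2)"
proof (rule integrable_gauss_quartic_bound[where A = "s\<^sup>2"])
  show "(\<lambda>z. (excess b (s * z))\<^sup>2) \<in> borel_measurable borel"
    unfolding excess_def by measurable
  show "\<bar>(excess b (s * z))\<^sup>2\<bar> \<le> s\<^sup>2 * (1 + z ^ 4)" for z
  proof -
    have "(excess b (s * z))\<^sup>2 \<le> s\<^sup>2 * z\<^sup>2"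
      using excess_power2_le[OF assms, of "s * z"] by (simp add: power_mult_distrib)
    also have "\<dots> \<le> s\<^sup>2 * (1 + z ^ 4)"
      using power2_le_one_plus_power4[of z] by (intro mult_left_mono) auto
    finally show ?thesis
      by simp
  qed
qed simp

lemma objective_mean_nonneg: "0 \<le> objective_mean sg e k"
  unfolding objective_mean_def by (intro Bochner_Integration.integral_nonneg) simp

text \<open>\<open>x - k a\<close> is centred normal with variance \<open>1 + (k sg)\<^sup>2\<close>.\<close>
lemma objective_mean_eq_integral_gauss:
  assumes sg: "0 < sg" and e: "0 \<le> e" and k: "0 \<le> k"
  shows "objective_mean sg e k = (\<integral>z. (excess (e * k) (sqrt (1 + (k * sg)\<^sup>2) * z))\<^sup>2 \<partial>gauss 1)"
proof -
  define \<alpha> where "\<alpha> = sqrt (1 + (k * sg)\<^sup>2)"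
  have "0 < \<alpha>"
    by (simp add: \<alpha>_def add_pos_nonneg)
  define \<psi> where "\<psi> u = ennreal ((excess (e * k) u)\<^sup>2)" for u
  have [measurable]: "\<psi> \<in> borel_measurable borel"
    unfolding \<psi>_def[abs_def] excess_def by measurable
  have inner: "ennreal (\<integral>x. coord_cost e k a x \<partial>gauss 1) = (\<integral>\<^sup>+x. \<psi> (x - k * a) \<partial>gauss 1)" for a
    using integrable_coord_cost[OF e k, of a]
    by (simp add: nn_integral_eq_integral coord_cost_def[symmetric] \<psi>_def)
  have "ennreal (objective_mean sg e k) = (\<integral>\<^sup>+a. ennreal (\<integral>x. coord_cost e k a x \<partial>gauss 1) \<partial>gauss sg)"
    unfolding objective_mean_def using integrable_coord_cost_mean[OF assms]
    by (simp add: nn_integral_eq_integral Bochner_Integration.integral_nonneg)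
  also have "\<dots> = (\<integral>\<^sup>+a. (\<integral>\<^sup>+x. \<psi> (x - k * a) \<partial>gauss 1) \<partial>gauss sg)"
    by (simp only: inner)
  also have "\<dots> = (\<integral>\<^sup>+u. \<psi> u \<partial>gauss \<alpha>)"
    unfolding \<alpha>_def by (rule nn_integral_gauss_convolution[OF sg]) measurable
  also have "\<dots> = (\<integral>\<^sup>+z. \<psi> (\<alpha> * z) \<partial>gauss 1)"
    unfolding distr_gauss_scale[OF \<open>0 < \<alpha>\<close>, symmetric] by (simp add: nn_integral_distr)
  also have "\<dots> = ennreal (\<integral>z. (excess (e * k) (\<alpha> * z))\<^sup>2 \<partial>gauss 1)"
    using integrable_gauss_excess_power2[of "e * k" \<alpha>] e k
    by (simp add: nn_integral_eq_integral \<psi>_def)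
  finally show ?thesis
    using e k by (simp add: objective_mean_nonneg Bochner_Integration.integral_nonneg \<alpha>_def)
qed

lemma indicator_excess_power2_half_line:
  assumes a: "0 < a" and b: "0 \<le> b"
  shows "indicator {0..} z * (excess b (a * z))\<^sup>2 = indicator {b / a..} z * (a * z - b)\<^sup>2"
proof (cases "b / a \<le> z")
  case True
  then have "b \<le> a * z"
    using a by (simp add: pos_divide_le_eq mult.commute)
  moreover have "0 \<le> b / a"
    using a b by simp
  then have "0 \<le> z"
    using True by linarith
  ultimately show ?thesis
    using True b by (simp add: excess_def)
next
  case False
  then have "a * z < b"
    using a by (simp add: not_le pos_less_divide_eq mult.commute)
  then have "0 \<le> z \<Longrightarrow> excess b (a * z) = 0"
    using a by (simp add: excess_def)
  then show ?thesis
    using False by (auto simp: indicator_def)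
qed

lemma integral_gauss_excess_power2_half_line:
  assumes a: "0 < a" and b: "0 \<le> b"
  shows "(\<integral>z. (excess b (a * z))\<^sup>2 \<partial>gauss 1) =
    2 * (LINT z:{b / a..}|lborel. std_normal_density z * (a * z - b)\<^sup>2)"
proof -
  define g where "g z = std_normal_density z * (excess b (a * z))\<^sup>2" for z
  define h where "h z = std_normal_density z * (a * z - b)\<^sup>2" for z
  have [measurable]: "g \<in> borel_measurable borel"
    unfolding g_def[abs_def] excess_def by measurable
  have [measurable]: "h \<in> borel_measurable borel"
    unfolding h_def[abs_def] by measurable
  have "integrable (gauss 1) (\<lambda>z. (a * z - b)\<^sup>2)"
  proof (rule integrable_gauss_quartic_bound[where A = "2 * a\<^sup>2 + 2 * b\<^sup>2"])
    show "\<bar>(a * z - b)\<^sup>2\<bar> \<le> (2 * a\<^sup>2 + 2 * b\<^sup>2) * (1 + z ^ 4)" for z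
    proof -
      have "(a * z - b)\<^sup>2 \<le> 2 * a\<^sup>2 * z\<^sup>2 + 2 * b\<^sup>2 * 1"
        using power2_add_le[of "a * z" "- b"] by (simp add: power_mult_distrib)
      also have "\<dots> \<le> 2 * a\<^sup>2 * (1 + z ^ 4) + 2 * b\<^sup>2 * (1 + z ^ 4)"
        using power2_le_one_plus_power4[of z] by (intro add_mono mult_left_mono) (auto simp: zero_le_even_power)
      finally show ?thesis
        by (simp add: algebra_simps)
    qed
  qed simp_all
  then have "integrable lborel h"
    unfolding h_def by (subst (asm) integrable_gauss_iff) auto
  then have "has_bochner_integral lborel (\<lambda>z. indicator {b / a..} z *\<^sub>R h z) (LINT z:{b / a..}|lborel. h z)"
    unfolding set_lebesgue_integral_def
    by (intro has_bochner_integral_integrable integrable_mult_indicator) auto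
  moreover have "indicator {0..} z *\<^sub>R g z = indicator {b / a..} z *\<^sub>R h z" for z
    using indicator_excess_power2_half_line[OF a b, of z] by (simp add: g_def h_def mult.left_commute)
  ultimately have "has_bochner_integral lborel g (2 *\<^sub>R (LINT z:{b / a..}|lborel. h z))"
    by (intro has_bochner_integral_even_function) (auto simp: g_def normal_density_def excess_def)
  moreover have "(\<integral>z. (excess b (a * z))\<^sup>2 \<partial>gauss 1) = integral\<^sup>L lborel g"
    by (subst integral_gauss) (auto simp: g_def[abs_def] excess_def)
  ultimately show ?thesis
    by (simp add: has_bochner_integral_iff h_def)
qed

lemma replica_fun_eq_objective_mean:
  assumes "0 < r" and "0 < sg" and "0 \<le> e" and "0 \<le> \<tau>"
  shows "replica_fun r sg e \<tau> = objective_mean sg e (\<tau> / r)"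
proof -
  have "sg\<^sup>2 * \<tau>\<^sup>2 / r\<^sup>2 = (\<tau> / r * sg)\<^sup>2"
    by (simp add: power_mult_distrib power_divide)
  then show ?thesis
    using objective_mean_eq_integral_gauss[of sg e "\<tau> / r"]
      integral_gauss_excess_power2_half_line[of "sqrt (1 + (\<tau> / r * sg)\<^sup>2)" "e * (\<tau> / r)"] assms
    unfolding replica_fun_def Let_def by (simp add: add_pos_nonneg)
qed

lemma continuous_on_objective_mean:
  assumes sg: "0 < sg" and e: "0 \<le> e"
  shows "continuous_on {0..} (objective_mean sg e)"
proof (rule continuous_on_sequentiallyI)
  fix u :: "nat \<Rightarrow> real" and k :: real
  assume u: "\<forall>n. u n \<in> {0..}" and k: "k \<in> {0..}" and lim: "u \<longlonglongrightarrow> k"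
  define \<phi> where "\<phi> l z = (excess (e * l) (sqrt (1 + (l * sg)\<^sup>2) * z))\<^sup>2" for l z
  obtain K where K: "\<And>n. \<bar>u n\<bar> \<le> K"
    using convergent_imp_Bseq[OF convergentI[OF lim]] by (auto simp: Bseq_def)
  have "(\<lambda>n. \<integral>z. \<phi> (u n) z \<partial>gauss 1) \<longlonglongrightarrow> (\<integral>z. \<phi> k z \<partial>gauss 1)"
  proof (rule integral_dominated_convergence[where w = "\<lambda>z. (1 + (K * sg)\<^sup>2) * z\<^sup>2"])
    show "\<phi> k \<in> borel_measurable (gauss 1)" "\<phi> (u n) \<in> borel_measurable (gauss 1)" for n
      unfolding \<phi>_def[abs_def] excess_def by measurable
    show "integrable (gauss 1) (\<lambda>z. (1 + (K * sg)\<^sup>2) * z\<^sup>2)"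
      using power2_le_one_plus_power4
      by (intro integrable_gauss_quartic_bound[where A = "1 + (K * sg)\<^sup>2"]) (auto intro: mult_left_mono)
    show "AE z in gauss 1. (\<lambda>n. \<phi> (u n) z) \<longlonglongrightarrow> \<phi> k z"
      unfolding \<phi>_def excess_def by (intro AE_I2 tendsto_intros lim)
    show "AE z in gauss 1. norm (\<phi> (u n) z) \<le> (1 + (K * sg)\<^sup>2) * z\<^sup>2" for n
    proof (intro AE_I2)
      fix z
      have "(u n * sg)\<^sup>2 \<le> (K * sg)\<^sup>2"
        using K[of n] sg by (simp add: power_mult_distrib abs_le_square_iff[symmetric] mult_right_mono)
      then have "(1 + (u n * sg)\<^sup>2) * z\<^sup>2 \<le> (1 + (K * sg)\<^sup>2) * z\<^sup>2"
        by (intro mult_right_mono) auto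
      moreover have "\<phi> (u n) z \<le> (1 + (u n * sg)\<^sup>2) * z\<^sup>2"
        using excess_power2_le[of "e * u n" "sqrt (1 + (u n * sg)\<^sup>2) * z"] u e
        by (simp add: \<phi>_def power_mult_distrib)
      ultimately show "norm (\<phi> (u n) z) \<le> (1 + (K * sg)\<^sup>2) * z\<^sup>2"
        by (simp add: \<phi>_def)
    qed
  qed
  then show "(\<lambda>n. objective_mean sg e (u n)) \<longlonglongrightarrow> objective_mean sg e k"
    using u k by (simp add: objective_mean_eq_integral_gauss[OF sg e] \<phi>_def)
qed

lemma integral_gauss_excess_power2_pos:
  assumes s: "0 < s" and b: "0 \<le> b"
  shows "0 < (\<integral>z. (excess b (s * z))\<^sup>2 \<partial>gauss 1)"
proof -
  define f where "f z = (excess b (s * z))\<^sup>2" for z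
  have [measurable]: "f \<in> borel_measurable borel"
    unfolding f_def[abs_def] excess_def by measurable
  have "integral\<^sup>L (gauss 1) f \<noteq> 0"
  proof
    assume "integral\<^sup>L (gauss 1) f = 0"
    moreover have "integrable (gauss 1) f"
      using integrable_gauss_excess_power2[OF b, of s] by (simp add: f_def[abs_def])
    ultimately have "AE z in gauss 1. f z = 0"
      using integral_nonneg_eq_0_iff_AE[of "gauss 1" f] by (simp add: f_def)
    then have "AE z in lborel. f z = 0"
      unfolding gauss_def by (subst (asm) AE_density) (auto simp: normal_density_pos)
    then have "emeasure lborel {z. f z \<noteq> 0} = 0"
      by (subst (asm) AE_iff_measurable[OF _ refl]) auto
    moreover have "emeasure lborel {(b + 1) / s <..< (b + 2) / s} \<le> emeasure lborel {z. f z \<noteq> 0}"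
      using s b by (intro emeasure_mono) (auto simp: f_def excess_def field_simps)
    moreover have "(b + 1) / s < (b + 2) / s"
      using s by (simp add: divide_strict_right_mono)
    ultimately show False
      by (simp add: emeasure_lborel_Ioo)
  qed
  moreover have "0 \<le> integral\<^sup>L (gauss 1) f"
    by (intro Bochner_Integration.integral_nonneg) (simp add: f_def)
  ultimately have "0 < integral\<^sup>L (gauss 1) f"
    by simp
  then show ?thesis
    by (simp add: f_def[abs_def])
qed

lemma objective_mean_ge_power2:
  assumes sg: "0 < sg" and e: "0 \<le> e" and k: "0 \<le> k"
  shows "k\<^sup>2 * (\<integral>z. (excess e (sg * z))\<^sup>2 \<partial>gauss 1) \<le> objective_mean sg e k"
proof -
  define \<alpha> where "\<alpha> = sqrt (1 + (k * sg)\<^sup>2)"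
  have "k * sg \<le> \<alpha>"
    using real_sqrt_le_mono[of "(k * sg)\<^sup>2" "1 + (k * sg)\<^sup>2"] k sg by (simp add: \<alpha>_def)
  moreover have "0 \<le> \<alpha>"
    by (simp add: \<alpha>_def)
  ultimately have scale: "\<bar>k * (sg * z)\<bar> \<le> \<bar>\<alpha> * z\<bar>" for z
    using k sg mult_right_mono[of "k * sg" \<alpha> "\<bar>z\<bar>"] by (simp add: abs_mult mult.assoc)
  have pointwise: "k\<^sup>2 * (excess e (sg * z))\<^sup>2 \<le> (excess (e * k) (\<alpha> * z))\<^sup>2" for z
  proof -
    have "k * excess e (sg * z) = excess (e * k) (k * (sg * z))"
      using k excess_scale[of k e "sg * z"] by (simp add: mult.commute)
    also have "\<dots> \<le> excess (e * k) (\<alpha> * z)"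
      by (intro excess_mono scale)
    finally show ?thesis
      using k by (metis excess_nonneg mult_nonneg_nonneg power_mono power_mult_distrib)
  qed
  have "k\<^sup>2 * (\<integral>z. (excess e (sg * z))\<^sup>2 \<partial>gauss 1) = (\<integral>z. k\<^sup>2 * (excess e (sg * z))\<^sup>2 \<partial>gauss 1)"
    by simp
  also have "\<dots> \<le> (\<integral>z. (excess (e * k) (\<alpha> * z))\<^sup>2 \<partial>gauss 1)"
    using integrable_gauss_excess_power2 e k pointwise by (intro integral_mono) auto
  also have "\<dots> = objective_mean sg e k"
    using objective_mean_eq_integral_gauss[OF sg e k] by (simp add: \<alpha>_def)
  finally show ?thesis .
qed

lemma filterlim_objective_mean_at_top:
  assumes sg: "0 < sg" and e: "0 \<le> e"
  shows "filterlim (objective_mean sg e) at_top at_top"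
proof -
  define c where "c = (\<integral>z. (excess e (sg * z))\<^sup>2 \<partial>gauss 1)"
  have "0 < c"
    unfolding c_def using sg e by (rule integral_gauss_excess_power2_pos)
  then have "filterlim (\<lambda>k. c * k\<^sup>2) at_top at_top"
    by (intro filterlim_tendsto_pos_mult_at_top[OF tendsto_const] filterlim_pow_at_top filterlim_ident) auto
  moreover have "\<forall>\<^sub>F k in at_top. c * k\<^sup>2 \<le> objective_mean sg e k"
    using eventually_ge_at_top[of 0]
    by eventually_elim (use objective_mean_ge_power2[OF sg e] in \<open>simp add: c_def mult.commute\<close>)
  ultimately show ?thesis
    by (rule filterlim_at_top_mono)
qed

lemma continuous_coercive_attains_min:
  fixes F :: "real \<Rightarrow> real"
  assumes cont: "continuous_on {0..} F" and coercive: "filterlim F at_top at_top"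
  shows "\<exists>k0\<ge>0. \<forall>k\<ge>0. F k0 \<le> F k"
proof -
  obtain R where R: "\<And>k. R \<le> k \<Longrightarrow> F 0 \<le> F k"
    using coercive by (auto simp: filterlim_at_top eventually_at_top_linorder)
  have "\<exists>k0\<in>{0..max 0 R}. \<forall>k\<in>{0..max 0 R}. F k0 \<le> F k"
    by (intro continuous_attains_inf compact_Icc continuous_on_subset[OF cont]) auto
  then obtain k0 where k0: "k0 \<in> {0..max 0 R}" and min: "\<And>k. k \<in> {0..max 0 R} \<Longrightarrow> F k0 \<le> F k"
    by blast
  have "F k0 \<le> F k" if "0 \<le> k" for k
  proof (cases "k \<le> max 0 R")
    case False
    have "F k0 \<le> F 0"
      using min[of 0] by simp
    also have "\<dots> \<le> F k"
      using R[of k] False by simp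
    finally show ?thesis .
  qed (use min that in auto)
  with k0 show ?thesis
    by auto
qed

section \<open>Concentration of the estimator\<close>

lemma prob_space_gauss_vec: "0 < s \<Longrightarrow> prob_space (gauss_vec P s)"
  unfolding gauss_vec_eq_PiM_gauss by (intro prob_space_PiM prob_space_gauss)

lemma
  assumes e: "0 \<le> e" and k: "0 \<le> k" and P: "0 < P"
  shows integrable_cone_objective_deviation:
      "integrable (gauss_vec P 1) (\<lambda>t. (cone_objective e P y t k / P - c)\<^sup>2)"
    and integral_cone_objective_deviation:
      "(\<integral>t. (cone_objective e P y t k / P - c)\<^sup>2 \<partial>gauss_vec P 1) =
        (1 / P)\<^sup>2 * ((\<Sum>\<mu><P. \<integral>x. (coord_cost e k (y \<mu>) x - c)\<^sup>2 \<partial>gauss 1) +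
          (\<Sum>\<mu><P. \<Sum>\<nu>\<in>{..<P} - {\<mu>}. ((\<integral>x. coord_cost e k (y \<mu>) x \<partial>gauss 1) - c) *
             ((\<integral>x. coord_cost e k (y \<nu>) x \<partial>gauss 1) - c)))"
proof -
  interpret g1: prob_space "gauss 1"
    by (rule prob_space_gauss) simp
  have int_dev: "integrable (gauss 1) (\<lambda>x. coord_cost e k a x - c)" for a
    using integrable_coord_cost[OF e k] by (intro Bochner_Integration.integrable_diff g1.integrable_const)
  have mean_dev: "(\<integral>x. coord_cost e k a x - c \<partial>gauss 1) = (\<integral>x. coord_cost e k a x \<partial>gauss 1) - c" for a
    using integrable_coord_cost[OF e k] g1.prob_space by simp
  have "cone_objective e P y t k / P - c = 1 / P * (\<Sum>\<mu><P. coord_cost e k (y \<mu>) (t \<mu>) - c)" for t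
    using P by (simp add: cone_objective_def sum_subtractf field_simps)
  then have sum_form: "(cone_objective e P y t k / P - c)\<^sup>2 =
      (1 / P)\<^sup>2 * (\<Sum>\<mu><P. coord_cost e k (y \<mu>) (t \<mu>) - c)\<^sup>2" for t
    by (simp add: power_divide)
  show "integrable (gauss_vec P 1) (\<lambda>t. (cone_objective e P y t k / P - c)\<^sup>2)"
    using integrable_PiM_sum_power2[OF g1.prob_space_axioms finite_lessThan,
        where f = "\<lambda>\<mu> x. coord_cost e k (y \<mu>) x - c"]
      int_dev integrable_coord_cost_deviation[OF e k]
    by (simp add: sum_form gauss_vec_eq_PiM_gauss borel_measurable_coord_cost_fixed)
  show "(\<integral>t. (cone_objective e P y t k / P - c)\<^sup>2 \<partial>gauss_vec P 1) =
        (1 / P)\<^sup>2 * ((\<Sum>\<mu><P. \<integral>x. (coord_cost e k (y \<mu>) x - c)\<^sup>2 \<partial>gauss 1) +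
          (\<Sum>\<mu><P. \<Sum>\<nu>\<in>{..<P} - {\<mu>}. ((\<integral>x. coord_cost e k (y \<mu>) x \<partial>gauss 1) - c) *
             ((\<integral>x. coord_cost e k (y \<nu>) x \<partial>gauss 1) - c)))"
    using integral_PiM_sum_power2[OF g1.prob_space_axioms finite_lessThan,
        where f = "\<lambda>\<mu> x. coord_cost e k (y \<mu>) x - c"]
      int_dev integrable_coord_cost_deviation[OF e k]
    by (simp add: sum_form gauss_vec_eq_PiM_gauss mean_dev borel_measurable_coord_cost_fixed)
qed

lemma sqdist_cone_lower_bound_grid:
  fixes F :: "real \<Rightarrow> real"
  assumes r: "0 < r" and e: "0 \<le> e" and P: "0 < P" and h: "0 < h" and n: "2 \<le> n" and d: "0 < d"
    and end_ge: "F 0 + 2 * d \<le> F (real n * h)"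
    and steps: "\<And>i. i < n \<Longrightarrow> \<bar>F (real (Suc i) * h) - F (real i * h)\<bar> \<le> D"
    and grid: "\<And>i. i \<le> n \<Longrightarrow> m \<le> F (real i * h)"
    and c: "c \<le> m - D - 3 * d"
  shows "c - \<bar>c\<bar> / d\<^sup>2 * (\<Sum>i\<le>n. (cone_objective e P y t (real i * h) / P - F (real i * h))\<^sup>2)
    \<le> 1 / P * sqdist_cone r e P y t"
proof -
  let ?W = "\<Sum>i\<le>n. (cone_objective e P y t (real i * h) / P - F (real i * h))\<^sup>2"
  have convex: "convex_on {0..} (\<lambda>k. cone_objective e P y t k / P)"
    using convex_on_subset[OF convex_on_cone_objective] P by (intro convex_on_cdiv) auto
  have "P * (c - \<bar>c\<bar> / d\<^sup>2 * ?W) \<le> sqdist_cone r e P y t"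
  proof (rule sqdist_cone_greatest[OF r e])
    fix k :: real assume "0 \<le> k"
    then have "c - \<bar>c\<bar> / d\<^sup>2 * ?W \<le> cone_objective e P y t k / P"
      by (intro convex_on_lower_bound_grid_deviation[OF convex _ h n d end_ge steps grid c])
        (auto simp: cone_objective_nonneg)
    then show "P * (c - \<bar>c\<bar> / d\<^sup>2 * ?W) \<le> cone_objective e P y t k"
      using P by (simp add: pos_le_divide_eq mult.commute)
  qed
  then show ?thesis
    using P by (simp add: pos_le_divide_eq mult.commute)
qed

lemma continuous_on_uniform_grid:
  fixes F :: "real \<Rightarrow> real"
  assumes cont: "continuous_on {0..R} F" and R: "0 < R" and D: "0 < D"
  obtains n :: nat and h :: real where "2 \<le> n" and "0 < h" and "real n * h = R"
    and "\<And>i. i < n \<Longrightarrow> \<bar>F (real (Suc i) * h) - F (real i * h)\<bar> \<le> D"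
proof -
  obtain \<delta> where "0 < \<delta>"
    and \<delta>: "\<And>x x'. x \<in> {0..R} \<Longrightarrow> x' \<in> {0..R} \<Longrightarrow> dist x' x < \<delta> \<Longrightarrow> dist (F x') (F x) < D"
    using compact_uniformly_continuous[OF cont compact_Icc] D unfolding uniformly_continuous_on_def by metis
  define n where "n = nat \<lceil>R / \<delta>\<rceil> + 2"
  define h where "h = R / n"
  have n: "2 \<le> n" and "0 < real n"
    by (simp_all add: n_def)
  have nh: "real n * h = R"
    using \<open>0 < real n\<close> by (simp add: h_def)
  have "R / \<delta> < real n"
    by (simp add: n_def) linarith
  then have "h < \<delta>" and h: "0 < h"
    using \<open>0 < \<delta>\<close> \<open>0 < real n\<close> R by (simp_all add: h_def field_simps)
  show ?thesis
  proof (rule that[OF n h nh])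
    fix i assume "i < n"
    then have "real (Suc i) * h \<le> R"
      using h by (simp flip: nh)
    then show "\<bar>F (real (Suc i) * h) - F (real i * h)\<bar> \<le> D"
      using \<delta>[of "real i * h" "real (Suc i) * h"] h \<open>h < \<delta>\<close> by (simp add: dist_real_def algebra_simps)
  qed
qed

context
  fixes sg e :: real
  assumes sg: "0 < sg" and e: "0 \<le> e"
begin

lemma
  assumes k: "0 \<le> k"
  shows integrable_cone_objective: "integrable (gauss_vec P 1) (\<lambda>t. cone_objective e P y t k)"
    and integral_cone_objective:
      "(\<integral>t. cone_objective e P y t k \<partial>gauss_vec P 1) = (\<Sum>\<mu><P. \<integral>x. coord_cost e k (y \<mu>) x \<partial>gauss 1)"
proof -
  have gauss: "prob_space (gauss 1)"
    by (rule prob_space_gauss) simp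
  have int: "integrable (gauss_vec P 1) (\<lambda>t. coord_cost e k (y \<mu>) (t \<mu>))" if "\<mu> \<in> {..<P}" for \<mu>
    using integrable_PiM_component_iff[OF gauss that, where f = "coord_cost e k (y \<mu>)"] integrable_coord_cost[OF e k]
    by (simp add: gauss_vec_eq_PiM_gauss borel_measurable_coord_cost_fixed)
  show "integrable (gauss_vec P 1) (\<lambda>t. cone_objective e P y t k)"
    unfolding cone_objective_def by (rule Bochner_Integration.integrable_sum) (rule int)
  show "(\<integral>t. cone_objective e P y t k \<partial>gauss_vec P 1) = (\<Sum>\<mu><P. \<integral>x. coord_cost e k (y \<mu>) x \<partial>gauss 1)"
    unfolding cone_objective_def using int
    by (simp add: Bochner_Integration.integral_sum gauss_vec_eq_PiM_gauss integral_PiM_component[OF gauss]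
        borel_measurable_coord_cost_fixed)
qed

lemma borel_measurable_sqdist_cone_pair:
  assumes "0 < r"
  shows "(\<lambda>(y, t). sqdist_cone r e P y t) \<in> borel_measurable (gauss_vec P sg \<Otimes>\<^sub>M gauss_vec P 1)"
proof -
  have "(\<lambda>z. sqdist_cone r e P (fst z) (snd z)) \<in> borel_measurable (gauss_vec P sg \<Otimes>\<^sub>M gauss_vec P 1)"
    using assms e unfolding gauss_vec_eq_PiM_gauss
    by (intro borel_measurable_sqdist_cone)
      (auto intro: measurable_compose[OF measurable_fst measurable_component_singleton]
        measurable_compose[OF measurable_snd measurable_component_singleton])
  then show ?thesis
    by (simp add: case_prod_beta')
qed

lemma
  assumes r: "0 < r"
  shows integrable_sqdist_cone: "integrable (gauss_vec P 1) (sqdist_cone r e P y)"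
    and integral_sqdist_cone_le:
      "0 \<le> k \<Longrightarrow> (\<integral>t. sqdist_cone r e P y t \<partial>gauss_vec P 1) \<le> (\<integral>t. cone_objective e P y t k \<partial>gauss_vec P 1)"
    and integral_sqdist_cone_nonneg: "0 \<le> (\<integral>t. sqdist_cone r e P y t \<partial>gauss_vec P 1)"
proof -
  have bound: "integrable (gauss_vec P 1) (\<lambda>t. cone_objective e P y t 0)"
    by (rule integrable_cone_objective) simp
  show int: "integrable (gauss_vec P 1) (sqdist_cone r e P y)"
  proof (rule Bochner_Integration.integrable_bound[OF bound])
    show "sqdist_cone r e P y \<in> borel_measurable (gauss_vec P 1)"
      unfolding gauss_vec_eq_PiM_gauss
    proof (intro borel_measurable_sqdist_cone[OF r e, where Y = "\<lambda>_. y" and T = "\<lambda>t. t"])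
      fix \<mu> assume "\<mu> < P"
      then show "(\<lambda>t. t \<mu>) \<in> borel_measurable (PiM {..<P} (\<lambda>_. gauss 1))"
        using measurable_component_singleton[of \<mu> "{..<P}" "\<lambda>_. gauss 1"] by simp
    qed simp
    show "AE t in gauss_vec P 1. norm (sqdist_cone r e P y t) \<le> norm (cone_objective e P y t 0)"
      using sqdist_cone_nonneg[OF r e] sqdist_cone_le_cone_objective[OF r e order_refl]
      by (auto simp: cone_objective_nonneg)
  qed
  show "(\<integral>t. sqdist_cone r e P y t \<partial>gauss_vec P 1) \<le> (\<integral>t. cone_objective e P y t k \<partial>gauss_vec P 1)"
    if "0 \<le> k"
    using int integrable_cone_objective[OF that] sqdist_cone_le_cone_objective[OF r e that]
    by (intro integral_mono) auto
  show "0 \<le> (\<integral>t. sqdist_cone r e P y t \<partial>gauss_vec P 1)"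
    using sqdist_cone_nonneg[OF r e] by (intro Bochner_Integration.integral_nonneg) auto
qed

lemma integrable_alpha_mf_inv:
  assumes r: "0 < r"
  shows "integrable (gauss_vec P sg) (alpha_mf_inv r e P)"
proof -
  interpret Y: prob_space "gauss_vec P sg"
    using sg by (rule prob_space_gauss_vec)
  interpret T: prob_space "gauss_vec P 1"
    by (rule prob_space_gauss_vec) simp
  define B where "B = real P * (\<integral>x. x\<^sup>2 \<partial>gauss 1)"
  have B: "(\<integral>t. cone_objective e P y t 0 \<partial>gauss_vec P 1) = B" for y
    using integral_cone_objective[OF order_refl] by (simp add: B_def)
  have "alpha_mf_inv r e P \<in> borel_measurable (gauss_vec P sg)"
    unfolding alpha_mf_inv_def[abs_def]
    using T.borel_measurable_lebesgue_integral[OF borel_measurable_sqdist_cone_pair[OF r]] by simp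
  moreover have "\<bar>alpha_mf_inv r e P y\<bar> \<le> 1 / real P * B" for y
    using integral_sqdist_cone_le[OF r order_refl, of P y] integral_sqdist_cone_nonneg[OF r, of P y] B[of y]
    by (simp add: alpha_mf_inv_def divide_right_mono)
  ultimately show ?thesis
    by (intro Y.integrable_const_bound[where B = "1 / real P * B"]) auto
qed

lemma mean_alpha_inv_le_objective_mean:
  assumes r: "0 < r" and k: "0 \<le> k"
  shows "mean_alpha_inv r sg e P \<le> objective_mean sg e k"
proof (cases "P = 0")
  case True
  then show ?thesis
    by (simp add: mean_alpha_inv_def alpha_mf_inv_def objective_mean_nonneg)
next
  case False
  have gauss: "prob_space (gauss sg)"
    using sg by (rule prob_space_gauss)
  let ?m = "\<lambda>a. \<integral>x. coord_cost e k a x \<partial>gauss 1"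
  have meas: "?m \<in> borel_measurable (gauss sg)"
    using borel_measurable_coord_cost_mean by simp
  have int: "integrable (gauss_vec P sg) (\<lambda>y. ?m (y \<mu>))" if "\<mu> \<in> {..<P}" for \<mu>
    using integrable_PiM_component_iff[OF gauss that meas] integrable_coord_cost_mean[OF sg e k]
    by (simp add: gauss_vec_eq_PiM_gauss)
  have "mean_alpha_inv r sg e P \<le> (\<integral>y. 1 / real P * (\<Sum>\<mu><P. ?m (y \<mu>)) \<partial>gauss_vec P sg)"
    unfolding mean_alpha_inv_def
  proof (rule integral_mono)
    show "integrable (gauss_vec P sg) (alpha_mf_inv r e P)"
      using r by (rule integrable_alpha_mf_inv)
    show "integrable (gauss_vec P sg) (\<lambda>y. 1 / real P * (\<Sum>\<mu><P. ?m (y \<mu>)))"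
      using int by (intro integrable_mult_right Bochner_Integration.integrable_sum)
    show "alpha_mf_inv r e P y \<le> 1 / real P * (\<Sum>\<mu><P. ?m (y \<mu>))" for y
      using integral_sqdist_cone_le[OF r k, of P y]
      by (simp add: alpha_mf_inv_def integral_cone_objective[OF k] divide_right_mono)
  qed
  also have "\<dots> = 1 / real P * (\<Sum>\<mu><P. \<integral>y. ?m (y \<mu>) \<partial>gauss_vec P sg)"
    using int by (simp add: Bochner_Integration.integral_sum)
  also have "\<dots> = 1 / real P * (\<Sum>\<mu><P. objective_mean sg e k)"
  proof -
    have "(\<integral>y. ?m (y \<mu>) \<partial>gauss_vec P sg) = objective_mean sg e k" if "\<mu> \<in> {..<P}" for \<mu>
      using integral_PiM_component[OF gauss that meas] by (simp add: gauss_vec_eq_PiM_gauss objective_mean_def)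
    then show ?thesis
      by simp
  qed
  also have "\<dots> = objective_mean sg e k"
    using False by simp
  finally show ?thesis .
qed


lemma
  assumes k: "0 \<le> k" and P: "0 < P"
  shows integrable_integral_cone_objective_deviation:
      "integrable (gauss_vec P sg)
         (\<lambda>y. \<integral>t. (cone_objective e P y t k / P - objective_mean sg e k)\<^sup>2 \<partial>gauss_vec P 1)"
    and integral_integral_cone_objective_deviation:
      "(\<integral>y. (\<integral>t. (cone_objective e P y t k / P - objective_mean sg e k)\<^sup>2 \<partial>gauss_vec P 1) \<partial>gauss_vec P sg) =
         objective_variance sg e k / P"
proof -
  define F where "F = objective_mean sg e k"
  define m where "m a = (\<integral>x. coord_cost e k a x \<partial>gauss 1) - F" for a
  define q where "q a = (\<integral>x. (coord_cost e k a x - F)\<^sup>2 \<partial>gauss 1)" for a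
  interpret gs: prob_space "gauss sg"
    using sg by (rule prob_space_gauss)
  have inner: "(\<lambda>y. \<integral>t. (cone_objective e P y t k / P - F)\<^sup>2 \<partial>gauss_vec P 1) =
      (\<lambda>y. (1 / P)\<^sup>2 * ((\<Sum>\<mu><P. q (y \<mu>)) + (\<Sum>\<mu><P. \<Sum>\<nu>\<in>{..<P} - {\<mu>}. m (y \<mu>) * m (y \<nu>))))"
    using integral_cone_objective_deviation[OF e k P] by (simp add: q_def m_def)
  have int_q: "integrable (gauss_vec P sg) (\<lambda>y. q (y \<mu>))"
    and integral_q: "(\<integral>y. q (y \<mu>) \<partial>gauss_vec P sg) = objective_variance sg e k" if "\<mu> \<in> {..<P}" for \<mu>
    using integrable_PiM_component_iff[OF gs.prob_space_axioms that, where f = q]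
      integral_PiM_component[OF gs.prob_space_axioms that, where f = q]
      integrable_coord_cost_deviation_mean[OF sg e k]
    by (simp_all add: gauss_vec_eq_PiM_gauss q_def[abs_def] F_def objective_variance_def
        borel_measurable_coord_cost_deviation_mean)
  have int_diag: "integrable (gauss_vec P sg) (\<lambda>y. \<Sum>\<mu><P. q (y \<mu>))"
    using int_q by (rule Bochner_Integration.integrable_sum)
  have int_m: "integrable (gauss sg) m"
    unfolding m_def[abs_def] using integrable_coord_cost_mean[OF sg e k]
    by (intro Bochner_Integration.integrable_diff gs.integrable_const)
  have "integral\<^sup>L (gauss sg) m = 0"
    using integrable_coord_cost_mean[OF sg e k] gs.prob_space
    by (simp add: m_def[abs_def] F_def objective_mean_def)
  note off = integrable_PiM_off_diagonal[OF gs.prob_space_axioms finite_lessThan int_m this, of P,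
      folded gauss_vec_eq_PiM_gauss]
    integral_PiM_off_diagonal[OF gs.prob_space_axioms finite_lessThan int_m this, of P,
      folded gauss_vec_eq_PiM_gauss]
  show "integrable (gauss_vec P sg)
      (\<lambda>y. \<integral>t. (cone_objective e P y t k / P - objective_mean sg e k)\<^sup>2 \<partial>gauss_vec P 1)"
    unfolding F_def[symmetric] inner
    by (intro integrable_mult_right Bochner_Integration.integrable_add int_diag off(1))
  have "(\<integral>y. (\<Sum>\<mu><P. q (y \<mu>)) \<partial>gauss_vec P sg) = P * objective_variance sg e k"
    using int_q integral_q by (simp add: Bochner_Integration.integral_sum)
  then show "(\<integral>y. (\<integral>t. (cone_objective e P y t k / P - objective_mean sg e k)\<^sup>2 \<partial>gauss_vec P 1)
      \<partial>gauss_vec P sg) = objective_variance sg e k / P"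
    unfolding F_def[symmetric] inner using P
    by (simp add: Bochner_Integration.integral_add[OF int_diag off(1)] off(2) power2_eq_square)
qed

lemma mean_alpha_inv_lower_bound:
  assumes r: "0 < r" and P: "0 < P" and h: "0 < h" and n: "2 \<le> n" and d: "0 < d"
    and end_ge: "objective_mean sg e 0 + 2 * d \<le> objective_mean sg e (real n * h)"
    and steps: "\<And>i. i < n \<Longrightarrow>
      \<bar>objective_mean sg e (real (Suc i) * h) - objective_mean sg e (real i * h)\<bar> \<le> D"
    and grid: "\<And>i. i \<le> n \<Longrightarrow> m \<le> objective_mean sg e (real i * h)"
    and c: "c \<le> m - D - 3 * d"
  shows "c - \<bar>c\<bar> / d\<^sup>2 * (\<Sum>i\<le>n. objective_variance sg e (real i * h)) / P \<le> mean_alpha_inv r sg e P"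
proof -
  let ?C = "\<bar>c\<bar> / d\<^sup>2"
  define w where "w i y t = (cone_objective e P y t (real i * h) / P - objective_mean sg e (real i * h))\<^sup>2"
    for i y t
  have hi: "0 \<le> real i * h" for i
    using h by simp
  interpret T: prob_space "gauss_vec P 1"
    by (rule prob_space_gauss_vec) simp
  interpret Y: prob_space "gauss_vec P sg"
    using sg by (rule prob_space_gauss_vec)
  have int_w: "integrable (gauss_vec P 1) (w i y)" for i y
    unfolding w_def[abs_def] by (rule integrable_cone_objective_deviation[OF e hi P])
  have int_int_w: "integrable (gauss_vec P sg) (\<lambda>y. \<integral>t. w i y t \<partial>gauss_vec P 1)" for i
    unfolding w_def by (rule integrable_integral_cone_objective_deviation[OF hi P])
  have "c - ?C * (\<Sum>i\<le>n. \<integral>t. w i y t \<partial>gauss_vec P 1) \<le> alpha_mf_inv r e P y" for y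
  proof -
    have "c - ?C * (\<Sum>i\<le>n. w i y t) \<le> 1 / P * sqdist_cone r e P y t" for t
      using sqdist_cone_lower_bound_grid[OF r e P h n d end_ge steps grid c, of y t] by (simp add: w_def)
    then have "(\<integral>t. c - ?C * (\<Sum>i\<le>n. w i y t) \<partial>gauss_vec P 1) \<le> (\<integral>t. 1 / P * sqdist_cone r e P y t \<partial>gauss_vec P 1)"
      using int_w integrable_sqdist_cone[OF r]
      by (intro integral_mono Bochner_Integration.integrable_diff integrable_mult_right
          Bochner_Integration.integrable_sum T.integrable_const) auto
    then show ?thesis
      using int_w by (simp add: alpha_mf_inv_def Bochner_Integration.integral_sum T.prob_space)
  qed
  then have "(\<integral>y. c - ?C * (\<Sum>i\<le>n. \<integral>t. w i y t \<partial>gauss_vec P 1) \<partial>gauss_vec P sg) \<le> mean_alpha_inv r sg e P"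
    unfolding mean_alpha_inv_def using int_int_w integrable_alpha_mf_inv[OF r]
    by (intro integral_mono Bochner_Integration.integrable_diff integrable_mult_right
        Bochner_Integration.integrable_sum Y.integrable_const) auto
  moreover have "(\<integral>y. (\<integral>t. w i y t \<partial>gauss_vec P 1) \<partial>gauss_vec P sg) = objective_variance sg e (real i * h) / P"
    for i
    unfolding w_def by (rule integral_integral_cone_objective_deviation[OF hi P])
  ultimately show ?thesis
    using int_int_w
    by (simp add: Bochner_Integration.integral_sum Y.prob_space sum_divide_distrib[symmetric] ac_simps)
qed

text \<open>The grid lives on \<open>[0, R]\<close>, where \<open>R\<close> comes from coercivity and the mesh from uniform
  continuity; the Chebyshev penalty of the grid bound is \<open>O(1/P)\<close>.\<close>
lemma eventually_mean_alpha_inv_ge: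
  assumes r: "0 < r" and k0: "\<And>k. 0 \<le> k \<Longrightarrow> objective_mean sg e k0 \<le> objective_mean sg e k"
    and \<eta>: "0 < \<eta>"
  shows "\<forall>\<^sub>F P in sequentially. objective_mean sg e k0 - \<eta> \<le> mean_alpha_inv r sg e P"
proof -
  let ?F = "objective_mean sg e"
  define d where "d = \<eta> / 8"
  have d: "0 < d"
    using \<eta> by (simp add: d_def)
  obtain R where R: "0 < R" and big: "?F 0 + 2 * d \<le> ?F R"
  proof -
    obtain R where "\<And>k. R \<le> k \<Longrightarrow> ?F 0 + 2 * d \<le> ?F k"
      using filterlim_objective_mean_at_top[OF sg e]
      by (auto simp: filterlim_at_top eventually_at_top_linorder)
    then show thesis
      by (intro that[of "max 1 R"]) auto
  qed
  have "continuous_on {0..R} ?F"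
    by (rule continuous_on_subset[OF continuous_on_objective_mean[OF sg e]]) auto
  then obtain n h where n: "2 \<le> n" and h: "0 < h" and nh: "real n * h = R"
    and steps: "\<And>i. i < n \<Longrightarrow> \<bar>?F (real (Suc i) * h) - ?F (real i * h)\<bar> \<le> d"
    by (rule continuous_on_uniform_grid[OF _ R d]) auto
  have grid: "?F k0 \<le> ?F (real i * h)" for i
    using k0 h by simp
  have end_ge: "?F 0 + 2 * d \<le> ?F (real n * h)"
    using big by (simp add: nh)
  define c where "c = ?F k0 - d - 3 * d"
  define S where "S = \<bar>c\<bar> / d\<^sup>2 * (\<Sum>i\<le>n. objective_variance sg e (real i * h))"
  have lower: "c - S / P \<le> mean_alpha_inv r sg e P" if "0 < P" for P
    unfolding c_def S_def by (rule mean_alpha_inv_lower_bound[OF r that h n d end_ge steps grid order_refl])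
  have "(\<lambda>P. S / real P) \<longlonglongrightarrow> 0"
    by (rule tendsto_divide_0[OF tendsto_const filterlim_at_top_imp_at_infinity[OF filterlim_real_sequentially]])
  then have "\<forall>\<^sub>F P in sequentially. S / real P < \<eta> / 2"
    using \<eta> by (intro order_tendstoD) auto
  then show ?thesis
    using eventually_gt_at_top[of 0]
  proof eventually_elim
    case (elim P)
    have "c - S / P \<le> mean_alpha_inv r sg e P"
      using elim(2) by (intro lower) simp
    moreover have "c = ?F k0 - \<eta> / 2"
      by (simp add: c_def d_def)
    ultimately show ?case
      using elim(1) by linarith
  qed
qed

lemma tendsto_mean_alpha_inv:
  assumes r: "0 < r" and k0: "0 \<le> k0" "\<And>k. 0 \<le> k \<Longrightarrow> objective_mean sg e k0 \<le> objective_mean sg e k"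
  shows "(\<lambda>P. mean_alpha_inv r sg e P) \<longlonglongrightarrow> objective_mean sg e k0"
proof (rule order_tendstoI)
  fix a assume a_less: "a < objective_mean sg e k0"
  then have "0 < (objective_mean sg e k0 - a) / 2"
    by simp
  then have "\<forall>\<^sub>F P in sequentially.
      objective_mean sg e k0 - (objective_mean sg e k0 - a) / 2 \<le> mean_alpha_inv r sg e P"
    using eventually_mean_alpha_inv_ge[OF r k0(2)] by blast
  moreover have "a < objective_mean sg e k0 - (objective_mean sg e k0 - a) / 2"
    using a_less by (simp add: field_simps)
  ultimately show "\<forall>\<^sub>F P in sequentially. a < mean_alpha_inv r sg e P"
    by (auto elim: eventually_mono intro: less_le_trans)
next
  fix a assume "objective_mean sg e k0 < a"
  then have "mean_alpha_inv r sg e P < a" for P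
    using mean_alpha_inv_le_objective_mean[OF r k0(1), of P] by linarith
  then show "\<forall>\<^sub>F P in sequentially. mean_alpha_inv r sg e P < a"
    by simp
qed

end

theorem theorem3:
  fixes r sg eps :: real
  assumes "r > 0" and "sg > 0" and "eps > 0"
  shows "\<exists>tau0 \<ge> 0. (\<forall>tau \<ge> 0. replica_fun r sg eps tau0 \<le> replica_fun r sg eps tau)
           \<and> (\<lambda>P. mean_alpha_inv r sg eps P) \<longlonglongrightarrow> replica_fun r sg eps tau0"
proof -
  have r: "0 < r" and sg: "0 < sg" and e: "0 \<le> eps"
    using assms by simp_all
  obtain k0 where k0: "0 \<le> k0" "\<And>k. 0 \<le> k \<Longrightarrow> objective_mean sg eps k0 \<le> objective_mean sg eps k"
    using continuous_coercive_attains_min[OF continuous_on_objective_mean[OF sg e]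
        filterlim_objective_mean_at_top[OF sg e]] by blast
  have at_k0: "replica_fun r sg eps (r * k0) = objective_mean sg eps k0"
    using replica_fun_eq_objective_mean[OF r sg e, of "r * k0"] r k0(1) by simp
  show ?thesis
  proof (intro exI[of _ "r * k0"] conjI allI impI)
    show "0 \<le> r * k0"
      using r k0(1) by simp
  next
    fix \<tau> :: real assume "0 \<le> \<tau>"
    then show "replica_fun r sg eps (r * k0) \<le> replica_fun r sg eps \<tau>"
      using k0(2)[of "\<tau> / r"] r by (simp add: at_k0 replica_fun_eq_objective_mean[OF r sg e])
  next
    show "(\<lambda>P. mean_alpha_inv r sg eps P) \<longlonglongrightarrow> replica_fun r sg eps (r * k0)"
      unfolding at_k0 by (rule tendsto_mean_alpha_inv[OF sg e r k0])
  qed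
qed

end
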